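(* Let $\lambda,\mu\in DP$ with $D_\mu\subseteq D_\lambda$ and let $\nu=c(T_{\lambda/\mu})$. Then $$f^\lambda_{\mu\nu}=\prod_{i=1}^{\ell(\nu)}2^{comp(P_i(\lambda/\mu))-1}.$$
   Context: $DP$: partitions with distinct parts (including $\emptyset$). Shifted diagram $D_\lambda=\{(i,j):1\le i\le\ell(\lambda),\ i\le j\le i+\lambda_i-1\}$; $D_{\lambda/\mu}=D_\lambda\setminus D_\mu$. Alphabet $\mathcal A=\{1'<1<2'<2<\cdots\}$. A tableau of shape $D$ is $T:D\to\mathcal A$, weakly increasing along rows and down columns, each unmarked $k$ at most once per column, each marked $k'$ at most once per row; content $c(T)=(c_1,c_2,\dots)$, $c_i$ = number of entries $i$ or $i'$ (trailing zeros omitted). Reading word $w=w_1\cdots w_n$: rows read left to right, from the bottom row to the top row. $m_i(0)=0$; for $1\le j\le n$, $m_i(j)$ = number of letters $i$ in $w_{n-j+1}\cdots w_n$; for $n<j\le2n$, $m_i(j)=m_i(n)+$ number of letters $i'$ in $w_1\cdots w_{j-n}$. For $k>1$, $w$ is $k$-amenable if (a) for $0\le j\le n-1$, $m_k(j)=m_{k-1}(j)$ implies $w_{n-j}\notin\{k,k'\}$; (b) for $n\le j\le2n-1$, $m_k(j)=m_{k-1}(j)$ implies $w_{j-n+1}\notin\{k-1,k'\}$; (c) the first letter of $w$ in $\{k',k\}$ (if any) is $k$; (d) the first letter of $w$ in $\{(k-1)',k-1\}$ (if any) is $k-1$. $T$ is amenable if $w(T)$ is $k$-amenable for all $k>1$.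 $f^\lambda_{\mu\nu}$ is the number of amenable tableaux of shape $D_{\lambda/\mu}$ with content $\nu$ (these are the coefficients in $Q_{\lambda/\mu}=\sum_\nu f^\lambda_{\mu\nu}Q_\nu$). $T_{\lambda/\mu}$ and $P_k(\lambda/\mu)$: $U_1=D_{\lambda/\mu}$; $P_k=\{(x,y)\in U_k:(x-1,y-1)\notin U_k\}$; on $P_k$ put $k'$ in $(x,y)$ if $(x+1,y)\in P_k$, else $k$; $U_{k+1}=U_k\setminus P_k$. $comp(D)$ is the number of edgewise connected components of $D$. *)

theory Defs
  imports Main
begin

text \<open>A partition with distinct parts is a strictly decreasing list of positive naturals
  (the empty list is the empty partition). Cells are pairs (row, column), 1-indexed.\<close>

definition DP :: "nat list \<Rightarrow> bool" where
  "DP lam \<longleftrightarrow> sorted_wrt (>) lam \<and> 0 \<notin> set lam"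

definition shifted_diagram :: "nat list \<Rightarrow> (nat \<times> nat) set" where
  "shifted_diagram lam =
     {(i, j). 1 \<le> i \<and> i \<le> length lam \<and> i \<le> j \<and> j + 1 \<le> i + lam ! (i - 1)}"

definition skew_diagram :: "nat list \<Rightarrow> nat list \<Rightarrow> (nat \<times> nat) set" where
  "skew_diagram lam mu = shifted_diagram lam - shifted_diagram mu"

text \<open>A letter is a pair (k, marked): (k, True) is k', (k, False) is k.
  Order 1' < 1 < 2' < 2 < ... is given by the rank 2k-1 for k', 2k for k.\<close>

type_synonym letter = "nat \<times> bool"

definition rank :: "letter \<Rightarrow> nat" where
  "rank a = 2 * fst a - (if snd a then 1 else 0)"

definition tableau :: "(nat \<times> nat) set \<Rightarrow> ((nat \<times> nat) \<Rightarrow> letter) \<Rightarrow> bool" where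
  "tableau D T \<longleftrightarrow>
     (\<forall>c\<in>D. fst (T c) \<ge> 1) \<and>
     (\<forall>i j j'. (i, j) \<in> D \<longrightarrow> (i, j') \<in> D \<longrightarrow> j \<le> j' \<longrightarrow> rank (T (i, j)) \<le> rank (T (i, j'))) \<and>
     (\<forall>i i' j. (i, j) \<in> D \<longrightarrow> (i', j) \<in> D \<longrightarrow> i \<le> i' \<longrightarrow> rank (T (i, j)) \<le> rank (T (i', j))) \<and>
     (\<forall>i i' j. (i, j) \<in> D \<longrightarrow> (i', j) \<in> D \<longrightarrow> i \<noteq> i' \<longrightarrow> T (i, j) = T (i', j) \<longrightarrow> snd (T (i, j))) \<and>
     (\<forall>i j j'. (i, j) \<in> D \<longrightarrow> (i, j') \<in> D \<longrightarrow> j \<noteq> j' \<longrightarrow> T (i, j) = T (i, j') \<longrightarrow> \<not> snd (T (i, j)))"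

text \<open>Content (c_1, c_2, ..., c_m) with m the largest entry, so no trailing zeros.\<close>

definition content :: "(nat \<times> nat) set \<Rightarrow> ((nat \<times> nat) \<Rightarrow> letter) \<Rightarrow> nat list" where
  "content D T =
     (let m = (if D = {} then 0 else Max ((\<lambda>c. fst (T c)) ` D))
      in map (\<lambda>i. card {c\<in>D. fst (T c) = i}) [1..<m + 1])"

text \<open>Rows read left to right, from the bottom row to the top row.\<close>

definition reading_word :: "(nat \<times> nat) set \<Rightarrow> ((nat \<times> nat) \<Rightarrow> letter) \<Rightarrow> letter list" where
  "reading_word D T =
     concat (map (\<lambda>i. map (\<lambda>j. T (i, j)) (sorted_list_of_set {j. (i, j) \<in> D}))
                 (rev (sorted_list_of_set (fst ` D))))"

definition mcount :: "letter list \<Rightarrow> nat \<Rightarrow> nat \<Rightarrow> nat" where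
  "mcount w i j =
     (let n = length w in
      if j \<le> n then count_list (drop (n - j) w) (i, False)
      else count_list w (i, False) + count_list (take (j - n) w) (i, True))"

definition k_amenable :: "nat \<Rightarrow> letter list \<Rightarrow> bool" where
  "k_amenable k w \<longleftrightarrow>
     (let n = length w in
      (\<forall>j. j < n \<longrightarrow> mcount w k j = mcount w (k - 1) j \<longrightarrow>
            w ! (n - j - 1) \<notin> {(k, False), (k, True)}) \<and>
      (\<forall>j. n \<le> j \<and> j < 2 * n \<longrightarrow> mcount w k j = mcount w (k - 1) j \<longrightarrow>
            w ! (j - n) \<notin> {(k - 1, False), (k, True)}) \<and>
      (case filter (\<lambda>a. a \<in> {(k, True), (k, False)}) w of
         [] \<Rightarrow> True | a # _ \<Rightarrow> a = (k, False)) \<and>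
      (case filter (\<lambda>a. a \<in> {(k - 1, True), (k - 1, False)}) w of
         [] \<Rightarrow> True | a # _ \<Rightarrow> a = (k - 1, False)))"

definition amenable :: "(nat \<times> nat) set \<Rightarrow> ((nat \<times> nat) \<Rightarrow> letter) \<Rightarrow> bool" where
  "amenable D T \<longleftrightarrow> (\<forall>k>1. k_amenable k (reading_word D T))"

text \<open>Tableaux are functions on D; outside D they are fixed to a dummy value so that
  distinct tableaux correspond to distinct functions.\<close>

definition fcoef :: "nat list \<Rightarrow> nat list \<Rightarrow> nat list \<Rightarrow> nat" where
  "fcoef lam mu nu =
     card {T. tableau (skew_diagram lam mu) T \<and> amenable (skew_diagram lam mu) T \<and>
              content (skew_diagram lam mu) T = nu \<and>
              (\<forall>c. c \<notin> skew_diagram lam mu \<longrightarrow> T c = (0, False))}"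

definition Pset :: "(nat \<times> nat) set \<Rightarrow> (nat \<times> nat) set" where
  "Pset U = {(x, y) \<in> U. (x - 1, y - 1) \<notin> U}"

text \<open>Ufam D k is U_{k+1}.\<close>
fun Ufam :: "(nat \<times> nat) set \<Rightarrow> nat \<Rightarrow> (nat \<times> nat) set" where
  "Ufam D 0 = D"
| "Ufam D (Suc k) = Ufam D k - Pset (Ufam D k)"

text \<open>Pk D k is P_k (for k >= 1).\<close>
definition Pk :: "(nat \<times> nat) set \<Rightarrow> nat \<Rightarrow> (nat \<times> nat) set" where
  "Pk D k = Pset (Ufam D (k - 1))"

definition Ttab :: "(nat \<times> nat) set \<Rightarrow> (nat \<times> nat) \<Rightarrow> letter" where
  "Ttab D c =
     (if c \<in> D then
        (let k = (LEAST k. k \<ge> 1 \<and> c \<in> Pk D k) in (k, (fst c + 1, snd c) \<in> Pk D k))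
      else (0, False))"

definition adjacent :: "(nat \<times> nat) \<Rightarrow> (nat \<times> nat) \<Rightarrow> bool" where
  "adjacent a b \<longleftrightarrow>
     (fst a = fst b \<and> (snd b = snd a + 1 \<or> snd a = snd b + 1)) \<or>
     (snd a = snd b \<and> (fst b = fst a + 1 \<or> fst a = fst b + 1))"

definition comp :: "(nat \<times> nat) set \<Rightarrow> nat" where
  "comp D = card (D // ({(a, b). a \<in> D \<and> b \<in> D \<and> adjacent a b}\<^sup>*))"

end

theory Submission
  imports Defs
begin

text \<open>In diagonal coordinates the skew shifted shape \<open>\<lambda>/\<mu>\<close> is a union of diagonal
  segments, and \<open>P\<^sub>k\<close> consists of the \<open>k\<close>-th cell of every diagonal of length at least \<open>k\<close>.
  Entries of a tableau strictly increase along diagonals, so a tableau whose content equals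
  that of \<open>T\<^sub>\<lambda>\<^sub>/\<^sub>\<mu>\<close> has the entry \<open>k\<close> or \<open>k'\<close> exactly on \<open>P\<^sub>k\<close>.  The row and column
  conditions then force the mark of every cell of \<open>P\<^sub>k\<close> that is adjacent to the cell of
  \<open>P\<^sub>k\<close> on the preceding diagonal; only the first cell of each connected run of \<open>P\<^sub>k\<close> is free.
  Counting the letters \<open>k\<close> and \<open>k - 1\<close> along the reading word shows that amenability
  amounts to the first cell of the leftmost run being unmarked.  So the amenable tableaux
  are in bijection with the markings of the first cells of the remaining
  \<open>comp(P\<^sub>k) - 1\<close> runs.\<close>

definition parts_above :: "nat \<Rightarrow> nat list \<Rightarrow> nat" where
  "parts_above d lam = length (filter (\<lambda>x. d < x) lam)"

lemma parts_above_iff: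
  assumes "sorted_wrt (>) lam" "i < length lam"
  shows "d < lam ! i \<longleftrightarrow> i < parts_above d lam"
  using assms
proof (induction lam arbitrary: i)
  case Nil then show ?case by simp
next
  case (Cons h t)
  have ht: "\<forall>x\<in>set t. x < h" and st: "sorted_wrt (>) t" using Cons.prems(1) by simp_all
  show ?case
  proof (cases "d < h")
    case True
    then show ?thesis using Cons.IH[OF st, of "i - 1"] Cons.prems(2)
      by (cases i) (simp_all add: parts_above_def)
  next
    case False
    then have "filter (\<lambda>x. d < x) t = []" using ht by (auto simp: filter_empty_conv)
    moreover have "\<not> d < (h#t) ! i"
      using False ht Cons.prems(2) by (cases i) (auto, meson leI less_trans nth_mem)
    ultimately show ?thesis using False by (simp add: parts_above_def)
  qed
qed

lemma shifted_diagram_by_diagonals: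
  assumes "DP lam"
  shows "shifted_diagram lam = {(x,y). 1 \<le> x \<and> x \<le> y \<and> x \<le> parts_above (y-x) lam}"
proof -
  have s: "sorted_wrt (>) lam" using assms by (simp add: DP_def)
  have "(i,j) \<in> shifted_diagram lam \<longleftrightarrow> 1 \<le> i \<and> i \<le> j \<and> i \<le> parts_above (j-i) lam" for i j
  proof (cases "1 \<le> i \<and> i \<le> j \<and> i \<le> length lam")
    case True
    have "j + 1 \<le> i + lam ! (i-1) \<longleftrightarrow> j - i < lam ! (i-1)" using True by auto
    also have "\<dots> \<longleftrightarrow> i - 1 < parts_above (j-i) lam"
      using parts_above_iff[OF s, of "i-1"] True by auto
    finally show ?thesis using True unfolding shifted_diagram_def by auto
  next
    case False
    moreover have "parts_above (j-i) lam \<le> length lam" by (simp add: parts_above_def)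
    ultimately show ?thesis unfolding shifted_diagram_def by auto
  qed
  then show ?thesis by auto
qed

lemma parts_above_Suc_le: "parts_above (Suc d) lam \<le> parts_above d lam"
  unfolding parts_above_def by (induction lam) auto

lemma parts_above_le_Suc:
  assumes "sorted_wrt (>) lam"
  shows "parts_above d lam \<le> Suc (parts_above (Suc d) lam)"
  using assms
proof (induction lam)
  case Nil then show ?case by (simp add: parts_above_def)
next
  case (Cons h t)
  have ht: "\<forall>x\<in>set t. x < h" using Cons.prems(1) by simp
  show ?case
  proof (cases "Suc d < h")
    case True then show ?thesis using Cons by (simp add: parts_above_def)
  next
    case False
    then have "filter (\<lambda>x. d < x) t = []" using ht by (auto simp: filter_empty_conv)
    then show ?thesis using False by (simp add: parts_above_def)
  qed
qed

lemma parts_above_eq_0: "sum_list lam \<le> d \<Longrightarrow> parts_above d lam = 0"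
  unfolding parts_above_def by (induction lam) auto

lemma rank_le_imp_fst_le: "rank u \<le> rank v \<Longrightarrow> 1 \<le> fst u \<Longrightarrow> fst u \<le> fst v"
  by (cases u; cases v) (auto simp: rank_def split: if_splits)

lemma rank_le_marked: "rank u \<le> rank v \<Longrightarrow> fst u = fst v \<Longrightarrow> 1 \<le> fst u \<Longrightarrow> snd v \<Longrightarrow> snd u"
  by (cases u; cases v) (auto simp: rank_def split: if_splits)

lemma rank_le_unmarked:
  "rank u \<le> rank v \<Longrightarrow> fst u = fst v \<Longrightarrow> 1 \<le> fst u \<Longrightarrow> \<not> snd u \<Longrightarrow> \<not> snd v"
  by (cases u; cases v) (auto simp: rank_def split: if_splits)

lemma rank_same_fst_le: "fst u = fst v \<Longrightarrow> 1 \<le> fst u \<Longrightarrow> \<not> snd u \<or> snd v \<Longrightarrow> rank v \<le> rank u"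
  by (cases u; cases v) (auto simp: rank_def split: if_splits)

lemma fst_less_imp_rank_less: "fst u < fst v \<Longrightarrow> rank u < rank v"
  by (cases u; cases v) (auto simp: rank_def split: if_splits)

lemma sum_entries_content:
  assumes fin: "finite D" and pos: "\<forall>c\<in>D. 1 \<le> fst (f c)"
  shows "(\<Sum>c\<in>D. fst (f c)) = (\<Sum>i<length (content D f). (i+1) * content D f ! i)"
proof (cases "D = {}")
  case True then show ?thesis by (simp add: content_def)
next
  case False
  define g where "g = (\<lambda>c. fst (f c))"
  define m where "m = Max (g ` D)"
  have cm: "content D f = map (\<lambda>i. card {c\<in>D. g c = i}) [1..<m+1]"
    unfolding content_def Let_def m_def g_def using False by simp
  have rng: "g ` D \<subseteq> {1..m}" using pos fin unfolding m_def g_def by auto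
  have "(\<Sum>c\<in>D. g c) = (\<Sum>i\<in>g ` D. \<Sum>c\<in>{c\<in>D. g c = i}. g c)"
    by (rule sum.image_gen[OF fin])
  also have "\<dots> = (\<Sum>i\<in>g ` D. i * card {c\<in>D. g c = i})"
    by (rule sum.cong) simp_all
  also have "\<dots> = (\<Sum>i\<in>{1..m}. i * card {c\<in>D. g c = i})"
  proof (rule sum.mono_neutral_left)
    show "\<forall>i\<in>{1..m} - g ` D. i * card {c \<in> D. g c = i} = 0"
      by (metis (mono_tags, lifting) DiffE card.empty empty_Collect_eq image_eqI mult_0_right)
  qed (use rng in auto)
  also have "\<dots> = (\<Sum>i<length (content D f). (i+1) * content D f ! i)"
    unfolding cm by (simp add: sum.atLeast1_atMost_eq atLeastLessThan_upt[symmetric] del: upt_Suc)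
  finally show ?thesis unfolding g_def .
qed

lemma content_cong: "\<forall>c\<in>D. fst (f c) = fst (g c) \<Longrightarrow> content D f = content D g"
proof -
  assume h: "\<forall>c\<in>D. fst (f c) = fst (g c)"
  have "(\<lambda>c. fst (f c)) ` D = (\<lambda>c. fst (g c)) ` D" using h by (auto simp: image_iff)
  moreover have "\<And>i. {c\<in>D. fst (f c) = i} = {c\<in>D. fst (g c) = i}" using h by auto
  ultimately show ?thesis unfolding content_def by simp
qed

section \<open>Reading order and amenability\<close>

definition reads_before :: "(nat \<times> nat) \<Rightarrow> (nat \<times> nat) \<Rightarrow> bool" where
  "reads_before c c' \<longleftrightarrow> fst c > fst c' \<or> (fst c = fst c' \<and> snd c < snd c')"

lemma reads_before_irrefl: "\<not> reads_before c c"
  by (simp add: reads_before_def)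

lemma reads_before_asym: "reads_before c c' \<Longrightarrow> \<not> reads_before c' c"
  by (auto simp: reads_before_def)

lemma set_drop_sorted_wrt:
  assumes s: "sorted_wrt R xs" and irr: "\<And>x. \<not> R x x" and asy: "\<And>x y. R x y \<Longrightarrow> \<not> R y x"
    and p: "p < length xs"
  shows "set (drop (Suc p) xs) = {c \<in> set xs. R (xs!p) c}"
proof (rule set_eqI)
  fix c
  show "c \<in> set (drop (Suc p) xs) \<longleftrightarrow> c \<in> {c \<in> set xs. R (xs!p) c}"
  proof
    assume "c \<in> set (drop (Suc p) xs)"
    then obtain q where q: "q < length xs - Suc p" "c = drop (Suc p) xs ! q"
      by (auto simp: in_set_conv_nth)
    then have c: "c = xs ! (Suc p + q)" "Suc p + q < length xs" by auto
    then show "c \<in> {c \<in> set xs. R (xs!p) c}"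
      using sorted_wrt_nth_less[OF s, of p "Suc p + q"] by auto
  next
    assume "c \<in> {c \<in> set xs. R (xs!p) c}"
    then obtain q where q: "q < length xs" "c = xs ! q" "R (xs!p) (xs!q)"
      by (auto simp: in_set_conv_nth)
    have "p < q"
    proof (rule ccontr)
      assume "\<not> p < q"
      then have "q = p \<or> q < p" by auto
      then show False using q irr asy sorted_wrt_nth_less[OF s, of q p] p by auto
    qed
    then show "c \<in> set (drop (Suc p) xs)"
      using q by (auto simp: in_set_conv_nth intro!: exI[of _ "q - Suc p"])
  qed
qed

lemma set_take_sorted_wrt:
  assumes s: "sorted_wrt R xs" and irr: "\<And>x. \<not> R x x" and asy: "\<And>x y. R x y \<Longrightarrow> \<not> R y x"
    and p: "p < length xs"
  shows "set (take p xs) = {c \<in> set xs. R c (xs!p)}"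
proof (rule set_eqI)
  fix c
  show "c \<in> set (take p xs) \<longleftrightarrow> c \<in> {c \<in> set xs. R c (xs!p)}"
  proof
    assume "c \<in> set (take p xs)"
    then obtain q where q: "q < p" "c = xs ! q" using p by (auto simp: in_set_conv_nth)
    then show "c \<in> {c \<in> set xs. R c (xs!p)}" using sorted_wrt_nth_less[OF s, of q p] p by auto
  next
    assume "c \<in> {c \<in> set xs. R c (xs!p)}"
    then obtain q where q: "q < length xs" "c = xs ! q" "R (xs!q) (xs!p)"
      by (auto simp: in_set_conv_nth)
    have "q < p"
    proof (rule ccontr)
      assume "\<not> q < p"
      then have "q = p \<or> p < q" by auto
      then show False using q irr asy sorted_wrt_nth_less[OF s, of p q] p by auto
    qed
    then show "c \<in> set (take p xs)" using q p by (auto simp: in_set_conv_nth intro!: exI[of _ q])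
  qed
qed

lemma count_list_map_distinct:
  "distinct ys \<Longrightarrow> count_list (map T ys) v = card {c \<in> set ys. T c = v}"
proof -
  assume d: "distinct ys"
  have "count_list (map T ys) v = length (filter (\<lambda>c. T c = v) ys)"
  proof -
    have "((=) v \<circ> T) = (\<lambda>c. T c = v)" by (auto simp: fun_eq_iff)
    then show ?thesis by (simp add: count_list_eq_length_filter filter_map)
  qed
  also have "\<dots> = card (set (filter (\<lambda>c. T c = v) ys))"
    using d by (simp add: distinct_card del: set_filter)
  finally show ?thesis by simp
qed

definition reading_cells :: "(nat \<times> nat) set \<Rightarrow> (nat \<times> nat) list" where
  "reading_cells D =
     concat (map (\<lambda>i. map (\<lambda>j. (i, j)) (sorted_list_of_set {j. (i, j) \<in> D}))
                 (rev (sorted_list_of_set (fst ` D))))"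

lemma reading_word_eq_map: "reading_word D T = map T (reading_cells D)"
  by (simp add: reading_word_def reading_cells_def map_concat comp_def o_def)

lemma finite_row: "finite D \<Longrightarrow> finite {j. (i, j) \<in> D}"
proof -
  assume f: "finite D"
  have "{j. (i, j) \<in> D} \<subseteq> snd ` D" by force
  then show ?thesis using f finite_subset by blast
qed

lemma set_reading_cells: "finite D \<Longrightarrow> set (reading_cells D) = D"
  by (auto simp: reading_cells_def finite_row image_iff)

lemma sorted_wrt_irrefl_distinct: "sorted_wrt R xs \<Longrightarrow> (\<And>x. \<not> R x x) \<Longrightarrow> distinct xs"
  by (induction xs) auto

lemma sorted_rows_reads_before:
  "sorted_wrt (>) rs \<Longrightarrow> (\<And>i. finite (X i)) \<Longrightarrow>
   sorted_wrt reads_before (concat (map (\<lambda>i. map (Pair i) (sorted_list_of_set (X i))) rs))"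
proof (induction rs)
  case Nil then show ?case by simp
next
  case (Cons r rs)
  have s1: "sorted_wrt reads_before (map (Pair r) (sorted_list_of_set (X r)))"
    unfolding sorted_wrt_map
    by (rule sorted_wrt_mono_rel[OF _ strict_sorted_list_of_set[of "X r"]])
      (simp add: reads_before_def)
  have s2: "sorted_wrt reads_before (concat (map (\<lambda>i. map (Pair i) (sorted_list_of_set (X i))) rs))"
    using Cons by simp
  have cr: "\<forall>x\<in>set (map (Pair r) (sorted_list_of_set (X r))).
      \<forall>y\<in>set (concat (map (\<lambda>i. map (Pair i) (sorted_list_of_set (X i))) rs)). reads_before x y"
    using Cons.prems(1) by (auto simp: reads_before_def)
  show ?case using s1 s2 cr by (simp add: sorted_wrt_append)
qed

lemma sorted_reading_cells: "finite D \<Longrightarrow> sorted_wrt reads_before (reading_cells D)"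
  unfolding reading_cells_def
  by (rule sorted_rows_reads_before)
    (auto simp: sorted_wrt_rev finite_row
      intro: sorted_wrt_mono_rel[OF _ strict_sorted_list_of_set])

lemma distinct_reading_cells: "finite D \<Longrightarrow> distinct (reading_cells D)"
  using sorted_reading_cells sorted_wrt_irrefl_distinct reads_before_irrefl by blast

lemma first_filter_reads_before:
  assumes s: "sorted_wrt reads_before cl"
  shows "(case filter Q (map T cl) of [] \<Rightarrow> True | a # _ \<Rightarrow> a = v) \<longleftrightarrow>
         (\<forall>c0\<in>set cl. Q (T c0) \<and> (\<forall>c\<in>set cl. Q (T c) \<longrightarrow> \<not> reads_before c c0) \<longrightarrow> T c0 = v)"
proof -
  have fm: "filter Q (map T cl) = map T (filter (Q \<circ> T) cl)" by (simp add: filter_map)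
  have sf: "sorted_wrt reads_before (filter (Q \<circ> T) cl)" using s by (rule sorted_wrt_filter)
  show ?thesis
  proof (cases "filter (Q \<circ> T) cl")
    case Nil
    then have "\<forall>c\<in>set cl. \<not> Q (T c)" by (simp add: filter_empty_conv)
    then show ?thesis using fm Nil by simp
  next
    case (Cons h t)
    have "h \<in> set (filter (Q \<circ> T) cl)" using Cons by simp
    then have hin: "h \<in> set cl" "Q (T h)" by auto
    have hmin: "\<forall>c\<in>set cl. Q (T c) \<longrightarrow> c \<noteq> h \<longrightarrow> reads_before h c"
    proof (intro ballI impI)
      fix c assume c: "c \<in> set cl" "Q (T c)" "c \<noteq> h"
      then have "c \<in> set (filter (Q \<circ> T) cl)" by simp
      then have "c \<in> set t" using Cons c(3) by simp
      then show "reads_before h c" using sf Cons by simp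
    qed
    have lhs: "(case filter Q (map T cl) of [] \<Rightarrow> True | a # _ \<Rightarrow> a = v) \<longleftrightarrow> T h = v"
      using fm Cons by simp
    have "c0 = h" if "c0 \<in> set cl" "Q (T c0)" "\<forall>c\<in>set cl. Q (T c) \<longrightarrow> \<not> reads_before c c0" for c0
      using hmin hin that by blast
    moreover have "\<forall>c\<in>set cl. Q (T c) \<longrightarrow> \<not> reads_before c h"
      using hmin reads_before_asym reads_before_irrefl by metis
    ultimately show ?thesis unfolding lhs using hin by blast
  qed
qed

text \<open>Conditions (a), (b) and (c)/(d) of \<open>k\<close>-amenability, rephrased as statements about the
  cells of \<open>D\<close> instead of positions in the reading word.\<close>

definition suffix_condition :: "nat \<Rightarrow> (nat \<times> nat) set \<Rightarrow> ((nat \<times> nat) \<Rightarrow> letter) \<Rightarrow> bool" where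
  "suffix_condition k D T \<longleftrightarrow> (\<forall>c0\<in>D. fst (T c0) = k \<longrightarrow>
     card {c\<in>D. reads_before c0 c \<and> T c = (k,False)} \<noteq>
     card {c\<in>D. reads_before c0 c \<and> T c = (k-1,False)})"

definition prefix_condition :: "nat \<Rightarrow> (nat \<times> nat) set \<Rightarrow> ((nat \<times> nat) \<Rightarrow> letter) \<Rightarrow> bool" where
  "prefix_condition k D T \<longleftrightarrow> (\<forall>c0\<in>D. (T c0 = (k-1,False) \<or> T c0 = (k,True)) \<longrightarrow>
     card {c\<in>D. T c = (k,False)} + card {c\<in>D. reads_before c c0 \<and> T c = (k,True)} \<noteq>
     card {c\<in>D. T c = (k-1,False)} + card {c\<in>D. reads_before c c0 \<and> T c = (k-1,True)})"

definition first_unmarked_condition ::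
  "nat \<Rightarrow> (nat \<times> nat) set \<Rightarrow> ((nat \<times> nat) \<Rightarrow> letter) \<Rightarrow> bool" where
  "first_unmarked_condition k D T \<longleftrightarrow>
     (\<forall>c0\<in>D. fst (T c0) = k \<and> (\<forall>c\<in>D. fst (T c) = k \<longrightarrow> \<not> reads_before c c0) \<longrightarrow>
       T c0 = (k,False))"

lemma mcount_suffix_card:
  assumes fin: "finite D" and p: "p < length (reading_cells D)"
  defines "n \<equiv> length (reading_cells D)"
  shows "mcount (reading_word D T) i (n - p - 1) =
         card {c\<in>D. reads_before (reading_cells D ! p) c \<and> T c = (i,False)}"
proof -
  let ?cl = "reading_cells D"
  have "mcount (reading_word D T) i (n - p - 1) = count_list (map T (drop (Suc p) ?cl)) (i, False)"
    using p by (simp add: mcount_def n_def Let_def Suc_diff_Suc reading_word_eq_map drop_map)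
  also have "\<dots> = card {c \<in> set (drop (Suc p) ?cl). T c = (i,False)}"
    using distinct_reading_cells[OF fin] by (simp add: count_list_map_distinct)
  also have "\<dots> = card {c\<in>D. reads_before (?cl!p) c \<and> T c = (i,False)}"
    using set_drop_sorted_wrt[OF sorted_reading_cells[OF fin] reads_before_irrefl
        reads_before_asym p] set_reading_cells[OF fin]
    by (simp add: conj_commute) (metis (lifting))
  finally show ?thesis .
qed

lemma mcount_prefix_card:
  assumes fin: "finite D" and q: "q < length (reading_cells D)"
  defines "n \<equiv> length (reading_cells D)"
  shows "mcount (reading_word D T) i (n + q) =
         card {c\<in>D. T c = (i,False)} +
         card {c\<in>D. reads_before c (reading_cells D ! q) \<and> T c = (i,True)}"
proof -
  let ?cl = "reading_cells D"
  have dc: "distinct ?cl" and sd: "set ?cl = D"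
    using distinct_reading_cells[OF fin] set_reading_cells[OF fin] .
  have "mcount (reading_word D T) i (n + q) =
        count_list (map T ?cl) (i,False) + count_list (map T (take q ?cl)) (i,True)"
    by (cases q) (auto simp: mcount_def n_def Let_def reading_word_eq_map take_map)
  also have "\<dots> = card {c\<in>D. T c = (i,False)} + card {c \<in> set (take q ?cl). T c = (i,True)}"
    using dc count_list_map_distinct[of ?cl T] count_list_map_distinct[of "take q ?cl" T] sd by simp
  also have "{c \<in> set (take q ?cl). T c = (i,True)} =
             {c\<in>D. reads_before c (?cl!q) \<and> T c = (i,True)}"
    using set_take_sorted_wrt[OF sorted_reading_cells[OF fin] reads_before_irrefl
        reads_before_asym q] sd
    by auto
  finally show ?thesis .
qed

lemma first_letter_condition_iff:
  assumes fin: "finite D"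
  shows "(case filter (\<lambda>a. a \<in> {(i, True), (i, False)}) (reading_word D T) of
            [] \<Rightarrow> True | a # _ \<Rightarrow> a = (i, False)) \<longleftrightarrow> first_unmarked_condition i D T"
proof -
  have e: "\<And>x::letter. x \<in> {(i, True), (i, False)} \<longleftrightarrow> fst x = i" by (case_tac x) auto
  show ?thesis
    unfolding reading_word_eq_map first_filter_reads_before[OF sorted_reading_cells[OF fin]] e
      first_unmarked_condition_def set_reading_cells[OF fin] by simp
qed

lemma k_amenableI:
  assumes fin: "finite D"
    and suffix: "suffix_condition k D T" and prefix: "prefix_condition k D T"
    and first_k: "first_unmarked_condition k D T"
    and first_pred: "first_unmarked_condition (k-1) D T"
  shows "k_amenable k (reading_word D T)"
proof -
  let ?w = "reading_word D T" and ?cl = "reading_cells D"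
  let ?n = "length ?cl"
  have len: "length ?w = ?n" by (simp add: reading_word_eq_map)
  have nth: "\<And>p. p < ?n \<Longrightarrow> ?w ! p = T (?cl ! p)" by (simp add: reading_word_eq_map)
  have cl_in: "\<And>p. p < ?n \<Longrightarrow> ?cl ! p \<in> D" using set_reading_cells[OF fin] nth_mem by blast
  have a: "\<forall>j. j < ?n \<longrightarrow> mcount ?w k j = mcount ?w (k - 1) j \<longrightarrow>
              ?w ! (?n - j - 1) \<notin> {(k, False), (k, True)}"
  proof (intro allI impI)
    fix j assume j: "j < ?n" "mcount ?w k j = mcount ?w (k - 1) j"
    define p where "p = ?n - j - 1"
    have p: "p < ?n" "j = ?n - p - 1" using j(1) p_def by auto
    have "card {c\<in>D. reads_before (?cl!p) c \<and> T c = (k,False)} =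
          card {c\<in>D. reads_before (?cl!p) c \<and> T c = (k-1,False)}"
      using j(2) unfolding p(2) mcount_suffix_card[OF fin p(1)] .
    then have "fst (T (?cl!p)) \<noteq> k"
      using suffix[unfolded suffix_condition_def, rule_format, OF cl_in[OF p(1)]] by blast
    then show "?w ! (?n - j - 1) \<notin> {(k, False), (k, True)}" using nth[OF p(1)] p_def by auto
  qed
  have b: "\<forall>j. ?n \<le> j \<and> j < 2 * ?n \<longrightarrow> mcount ?w k j = mcount ?w (k - 1) j \<longrightarrow>
              ?w ! (j - ?n) \<notin> {(k - 1, False), (k, True)}"
  proof (intro allI impI)
    fix j assume j: "?n \<le> j \<and> j < 2 * ?n" "mcount ?w k j = mcount ?w (k - 1) j"
    define q where "q = j - ?n"
    have q: "q < ?n" "j = ?n + q" using j(1) q_def by auto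
    have "card {c\<in>D. T c = (k,False)} + card {c\<in>D. reads_before c (?cl!q) \<and> T c = (k,True)} =
          card {c\<in>D. T c = (k-1,False)} + card {c\<in>D. reads_before c (?cl!q) \<and> T c = (k-1,True)}"
      using j(2) unfolding q(2) mcount_prefix_card[OF fin q(1)] .
    then have "\<not> (T (?cl!q) = (k-1,False) \<or> T (?cl!q) = (k,True))"
      using prefix[unfolded prefix_condition_def, rule_format, OF cl_in[OF q(1)]] by blast
    then show "?w ! (j - ?n) \<notin> {(k - 1, False), (k, True)}" using nth[OF q(1)] q_def by auto
  qed
  show ?thesis
    unfolding k_amenable_def Let_def len first_letter_condition_iff[OF fin]
    by (intro conjI; (fact a | fact b | fact first_k | fact first_pred))
qed

lemma k_amenable_first_unmarked:
  assumes "finite D" and "k_amenable k (reading_word D T)"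
  shows "first_unmarked_condition (k-1) D T"
  using assms unfolding k_amenable_def Let_def first_letter_condition_iff[OF assms(1)] by blast

lemma downward_induct:
  assumes base: "\<And>d. N \<le> d \<Longrightarrow> P d" and step: "\<And>d. d < N \<Longrightarrow> P (Suc d) \<Longrightarrow> P d"
  shows "P d"
proof (cases "d \<le> N")
  case True
  show ?thesis using True
  proof (induction d rule: inc_induct)
    case base then show ?case using assms(1) by simp
  next
    case (step n) then show ?case using assms(2) by simp
  qed
next
  case False then show ?thesis using base by simp
qed

lemma card_ge_Suc_split:
  assumes fin: "finite {e. Q e}"
  shows "card {e. Q e \<and> d \<le> e} = card {e. Q e \<and> Suc d \<le> e} + (if Q d then 1 else 0)"
proof -
  have f: "finite {e. Q e \<and> Suc d \<le> e}" using fin by (rule rev_finite_subset) auto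
  show ?thesis
  proof (cases "Q d")
    case True
    have "{e. Q e \<and> d \<le> e} = insert d {e. Q e \<and> Suc d \<le> e}" using True by auto
    then show ?thesis using True f by simp
  next
    case False
    have "{e. Q e \<and> d \<le> e} = {e. Q e \<and> Suc d \<le> e}" using False by (auto simp: le_less Suc_le_eq)
    then show ?thesis using False by simp
  qed
qed

lemma card_split_below:
  assumes "finite {d::nat. Q d}"
  shows "card {d. Q d \<and> d < d0} + card {d. Q d \<and> d0 \<le> d} = card {d. Q d}"
proof -
  have e: "{d. Q d} = {d. Q d \<and> d < d0} \<union> {d. Q d \<and> d0 \<le> d}" by auto
  have f: "finite {d. Q d \<and> d < d0}" "finite {d. Q d \<and> d0 \<le> d}"
    using assms by (auto intro: rev_finite_subset)
  have i: "{d. Q d \<and> d < d0} \<inter> {d. Q d \<and> d0 \<le> d} = {}" by auto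
  show ?thesis unfolding e using card_Un_disjoint[OF f i] by simp
qed

section \<open>Skew shifted shapes by diagonals\<close>

text \<open>\<open>a d\<close> and \<open>b d\<close> stand for the numbers of rows of \<open>\<lambda>\<close> and of \<open>\<mu>\<close> that meet the
  diagonal \<open>y - x = d\<close>, so the cells of \<open>\<lambda>/\<mu>\<close> on this diagonal are those in the rows
  \<open>b d < x \<le> a d\<close>; \<open>cell d k\<close> is the \<open>k\<close>-th of them and has \<open>level\<close> \<open>k\<close>.\<close>

locale skew_shape =
  fixes a b :: "nat \<Rightarrow> nat" and W :: nat
  assumes a_Suc_le: "\<And>d. a (Suc d) \<le> a d"
    and a_le_Suc: "\<And>d. a d \<le> Suc (a (Suc d))"
    and b_Suc_le: "\<And>d. b (Suc d) \<le> b d"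
    and b_le_Suc: "\<And>d. b d \<le> Suc (b (Suc d))"
    and b_le_a: "\<And>d. b d \<le> a d"
    and a_vanishes: "\<And>d. W \<le> d \<Longrightarrow> a d = 0"
begin

definition shape :: "(nat \<times> nat) set" where
  "shape = {(x,y). x \<le> y \<and> b (y-x) < x \<and> x \<le> a (y-x)}"

definition diag_len :: "nat \<Rightarrow> nat" where
  "diag_len d = a d - b d"

definition cell :: "nat \<Rightarrow> nat \<Rightarrow> nat \<times> nat" where
  "cell d k = (b d + k, b d + k + d)"

definition long_diags :: "nat \<Rightarrow> nat set" where
  "long_diags k = {d. 0 < k \<and> k \<le> diag_len d}"

definition diag :: "nat \<times> nat \<Rightarrow> nat" where
  "diag c = snd c - fst c"

definition level :: "nat \<times> nat \<Rightarrow> nat" where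
  "level c = fst c - b (diag c)"

text \<open>The \<open>k\<close>-th cells of the diagonals \<open>d - 1\<close> and \<open>d\<close> are \<open>linked\<close> if both exist; they are
  then adjacent, in the same row if \<open>b d = b (d - 1)\<close> and in the same column otherwise, where
  the upper letter has to be marked.\<close>

definition linked :: "nat \<Rightarrow> nat \<Rightarrow> bool" where
  "linked d k \<longleftrightarrow> 0 < d \<and> k \<le> diag_len (d-1)"

definition forced_mark :: "nat \<Rightarrow> nat \<Rightarrow> bool" where
  "forced_mark d k \<longleftrightarrow> linked d k \<and> b d \<noteq> b (d-1)"

lemma a_antimono: "d \<le> d' \<Longrightarrow> a d' \<le> a d"
  by (rule lift_Suc_antimono_le[of a]) (use a_Suc_le in auto)

lemma b_antimono: "d \<le> d' \<Longrightarrow> b d' \<le> b d"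
  by (rule lift_Suc_antimono_le[of b]) (use b_Suc_le in auto)

lemma b_le_shift: "d \<le> d' \<Longrightarrow> b d \<le> b d' + (d' - d)"
proof (induction d' rule: dec_induct)
  case base then show ?case by simp
next
  case (step n) then show ?case using b_le_Suc[of n] by simp
qed

lemma a_le_shift: "d \<le> d' \<Longrightarrow> a d \<le> a d' + (d' - d)"
proof (induction d' rule: dec_induct)
  case base then show ?case by simp
next
  case (step n) then show ?case using a_le_Suc[of n] by simp
qed

lemma long_diags_bounded: "long_diags k \<subseteq> {..<W}"
proof
  fix d assume "d \<in> long_diags k"
  then have "0 < a d" using b_le_a[of d] by (auto simp: long_diags_def diag_len_def)
  then show "d \<in> {..<W}" using a_vanishes[of d] by (cases "W \<le> d") auto
qed

lemma finite_long_diags[simp]: "finite (long_diags k)"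
  using long_diags_bounded finite_subset by blast

lemma cell_inj: "cell d k = cell d' k' \<Longrightarrow> d = d' \<and> k = k'"
proof -
  assume h: "cell d k = cell d' k'"
  then have "d = d'" by (simp add: cell_def)
  then show ?thesis using h by (simp add: cell_def)
qed

lemma diag_cell[simp]: "diag (cell d k) = d"
  by (simp add: diag_def cell_def)

lemma level_cell[simp]: "level (cell d k) = k"
  by (simp add: level_def) (simp add: cell_def)

lemma cell_in_shape: "d \<in> long_diags k \<Longrightarrow> cell d k \<in> shape"
  by (auto simp: long_diags_def cell_def shape_def diag_len_def)

lemma shape_cell:
  "c \<in> shape \<Longrightarrow> c = cell (diag c) (level c) \<and> diag c \<in> long_diags (level c)"
  by (cases c) (auto simp: long_diags_def cell_def shape_def diag_len_def diag_def level_def)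

lemma Ufam_shape: "Ufam shape k = {(x,y). x \<le> y \<and> b (y-x) + k < x \<and> x \<le> a (y-x)}"
proof (induction k)
  case 0 then show ?case by (simp add: shape_def)
next
  case (Suc k)
  have "(x,y) \<in> Ufam shape (Suc k) \<longleftrightarrow> x \<le> y \<and> b (y-x) + Suc k < x \<and> x \<le> a (y-x)" for x y
  proof -
    have "(x,y) \<in> Ufam shape (Suc k) \<longleftrightarrow> (x,y) \<in> Ufam shape k \<and> (x-1,y-1) \<in> Ufam shape k"
      by (auto simp: Pset_def)
    also have "\<dots> \<longleftrightarrow> x \<le> y \<and> b (y-x) + Suc k < x \<and> x \<le> a (y-x)"
    proof -
      have "x \<le> y \<and> b (y-x) + k < x \<Longrightarrow> y - 1 - (x - 1) = y - x" by auto
      then show ?thesis unfolding Suc by auto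
    qed
    finally show ?thesis .
  qed
  then show ?case by auto
qed

lemma Pk_shape: "0 < k \<Longrightarrow> Pk shape k = {(x,y). x \<le> y \<and> x = b (y-x) + k \<and> x \<le> a (y-x)}"
proof -
  assume k: "0 < k"
  have "(x,y) \<in> Pk shape k \<longleftrightarrow> x \<le> y \<and> x = b (y-x) + k \<and> x \<le> a (y-x)" for x y
  proof -
    have "(x,y) \<in> Pk shape k \<longleftrightarrow> (x,y) \<in> Ufam shape (k-1) \<and> (x-1,y-1) \<notin> Ufam shape (k-1)"
      by (simp add: Pk_def Pset_def)
    also have "\<dots> \<longleftrightarrow> x \<le> y \<and> x = b (y-x) + k \<and> x \<le> a (y-x)"
    proof -
      have "x \<le> y \<and> b (y-x) + (k-1) < x \<Longrightarrow> y - 1 - (x - 1) = y - x" by auto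
      then show ?thesis unfolding Ufam_shape using k by auto
    qed
    finally show ?thesis .
  qed
  then show ?thesis by auto
qed

lemma Pk_eq_cells: "0 < k \<Longrightarrow> Pk shape k = (\<lambda>d. cell d k) ` long_diags k"
proof -
  assume k: "0 < k"
  show ?thesis
  proof (rule set_eqI)
    fix c
    show "c \<in> Pk shape k \<longleftrightarrow> c \<in> (\<lambda>d. cell d k) ` long_diags k"
    proof
      assume "c \<in> Pk shape k"
      then obtain x y where c: "c = (x,y)" "x \<le> y" "x = b (y-x) + k" "x \<le> a (y-x)"
        using Pk_shape[OF k] by auto
      then have "c = cell (y-x) k" "y - x \<in> long_diags k"
        using k by (auto simp: cell_def long_diags_def diag_len_def)
      then show "c \<in> (\<lambda>d. cell d k) ` long_diags k" by auto
    next
      assume "c \<in> (\<lambda>d. cell d k) ` long_diags k"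
      then show "c \<in> Pk shape k"
        using Pk_shape[OF k] by (auto simp: cell_def long_diags_def diag_len_def)
    qed
  qed
qed

lemma cell_in_Pk: "d \<in> long_diags k \<Longrightarrow> cell d k \<in> Pk shape k"
  using Pk_eq_cells[of k] by (auto simp: long_diags_def)

lemma cell_in_Pk_iff: "0 < k \<Longrightarrow> cell d k' \<in> Pk shape k \<longleftrightarrow> k' = k \<and> d \<in> long_diags k"
  using Pk_eq_cells[of k] cell_inj by (auto, metis cell_inj)

lemma Ttab_cell:
  assumes "d \<in> long_diags k"
  shows "Ttab shape (cell d k) = (k, forced_mark d k)"
proof -
  have k: "0 < k" using assms by (simp add: long_diags_def)
  have c: "cell d k \<in> shape" using cell_in_shape[OF assms] .
  have L: "(LEAST k'. k' \<ge> 1 \<and> cell d k \<in> Pk shape k') = k"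
  proof (rule Least_equality)
    show "k \<ge> 1 \<and> cell d k \<in> Pk shape k" using k cell_in_Pk[OF assms] by simp
  next
    fix y assume "y \<ge> 1 \<and> cell d k \<in> Pk shape y"
    then show "k \<le> y" using cell_in_Pk_iff[of y d k] by auto
  qed
  have m: "(fst (cell d k) + 1, snd (cell d k)) \<in> Pk shape k \<longleftrightarrow> forced_mark d k"
  proof -
    have "(fst (cell d k) + 1, snd (cell d k)) \<in> Pk shape k \<longleftrightarrow>
       (b d + k + 1 \<le> b d + k + d \<and> b d + k + 1 = b (d-1) + k \<and> b d + k + 1 \<le> a (d-1))"
      using Pk_shape[OF k] by (simp add: cell_def)
    also have "\<dots> \<longleftrightarrow> forced_mark d k"
      using b_le_Suc[of "d-1"] b_Suc_le[of "d-1"] b_le_a[of "d-1"]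
      by (cases d) (auto simp: forced_mark_def linked_def diag_len_def)
    finally show ?thesis .
  qed
  show ?thesis using c L m by (simp add: Ttab_def Let_def)
qed

lemma finite_shape[simp]: "finite shape"
proof -
  have "shape \<subseteq> {..a 0} \<times> {..a 0 + W}"
  proof
    fix c assume c: "c \<in> shape"
    then obtain x y where xy: "c = (x,y)" "x \<le> y" "x \<le> a (y-x)" "b (y-x) < x"
      by (auto simp: shape_def)
    then have "y - x < W" using a_vanishes[of "y-x"] by (cases "W \<le> y - x") auto
    moreover have "x \<le> a 0" using xy a_antimono[of 0 "y-x"] by auto
    ultimately show "c \<in> {..a 0} \<times> {..a 0 + W}" using xy by auto
  qed
  then show ?thesis using finite_subset by blast
qed

lemma Ttab_shape: "c \<in> shape \<Longrightarrow> Ttab shape c = (level c, forced_mark (diag c) (level c))"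
  using Ttab_cell shape_cell by metis

subsection \<open>Tableaux with the content of \<open>T\<^sub>\<lambda>\<^sub>/\<^sub>\<mu>\<close>\<close>

lemma tableau_fst_pos: "tableau shape T \<Longrightarrow> c \<in> shape \<Longrightarrow> 1 \<le> fst (T c)"
  by (simp add: tableau_def)

lemma tableau_diag_strict:
  assumes T: "tableau shape T" and c1: "(x,y) \<in> shape" and c2: "(x+1,y+1) \<in> shape"
  shows "fst (T (x,y)) < fst (T (x+1,y+1))"
proof (rule ccontr)
  assume nl: "\<not> ?thesis"
  \<comment> \<open>then the letter in the cell \<open>(x, y+1)\<close> between the two would have to be repeated
    illegally in its row or in its column\<close>
  have c3: "(x,y+1) \<in> shape"
  proof -
    have "b (y+1-x) \<le> b (y-x)" using b_antimono[of "y-x" "y+1-x"] by simp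
    moreover have "a (y-x) \<le> Suc (a (y+1-x))"
      using a_le_Suc[of "y-x"] c1 by (auto simp: shape_def Suc_diff_le)
    ultimately show ?thesis using c1 c2 by (auto simp: shape_def)
  qed
  have r1: "rank (T (x,y)) \<le> rank (T (x,y+1))" using T c1 c3 unfolding tableau_def by auto
  have r2: "rank (T (x,y+1)) \<le> rank (T (x+1,y+1))" using T c2 c3 unfolding tableau_def by auto
  have f1: "1 \<le> fst (T (x,y))" "1 \<le> fst (T (x,y+1))" "1 \<le> fst (T (x+1,y+1))"
    using tableau_fst_pos[OF T] c1 c2 c3 by auto
  have e1: "fst (T (x,y)) = fst (T (x,y+1))" and e2: "fst (T (x,y+1)) = fst (T (x+1,y+1))"
    using rank_le_imp_fst_le[OF r1 f1(1)] rank_le_imp_fst_le[OF r2 f1(2)] nl by auto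
  have u: "\<not> snd (T (x,y+1))"
  proof
    assume m: "snd (T (x,y+1))"
    then have "snd (T (x,y))" using rank_le_marked[OF r1 e1 f1(1)] by simp
    then have "T (x,y) = T (x,y+1)" using m e1 by (cases "T (x,y)"; cases "T (x,y+1)") auto
    then show False using T c1 c3 m unfolding tableau_def by (metis n_not_Suc_n Suc_eq_plus1)
  qed
  then have "\<not> snd (T (x+1,y+1))" using rank_le_marked[OF r2 e2] f1 e1 by auto
  then have "T (x,y+1) = T (x+1,y+1)" using u e2 by (cases "T (x+1,y+1)"; cases "T (x,y+1)") auto
  then show False using T c2 c3 u unfolding tableau_def by (metis n_not_Suc_n Suc_eq_plus1)
qed

lemma level_le_entry_cell:
  assumes T: "tableau shape T"
  shows "d \<in> long_diags k \<Longrightarrow> k \<le> fst (T (cell d k))"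
proof (induction k)
  case 0 then show ?case by simp
next
  case (Suc k)
  show ?case
  proof (cases k)
    case 0 then show ?thesis using tableau_fst_pos[OF T cell_in_shape[OF Suc.prems]] by simp
  next
    case (Suc k')
    have dk: "d \<in> long_diags k" using Suc.prems \<open>k = Suc k'\<close> by (simp add: long_diags_def)
    have "k \<le> fst (T (cell d k))" using Suc.IH[OF dk] .
    also have "\<dots> < fst (T (cell d (Suc k)))"
      using tableau_diag_strict[OF T, of "b d + k" "b d + k + d"]
        cell_in_shape[OF dk] cell_in_shape[OF Suc.prems]
      by (simp add: cell_def)
    finally show ?thesis by simp
  qed
qed

lemma level_le_entry: "tableau shape T \<Longrightarrow> c \<in> shape \<Longrightarrow> level c \<le> fst (T c)"
  using level_le_entry_cell shape_cell by metis

definition level_entries :: "((nat \<times> nat) \<Rightarrow> letter) \<Rightarrow> bool" where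
  "level_entries T \<longleftrightarrow> (\<forall>c\<in>shape. fst (T c) = level c)"

lemma level_pos: "c \<in> shape \<Longrightarrow> 1 \<le> level c"
  using shape_cell[of c] by (auto simp: long_diags_def)

lemma content_Ttab_level_entries:
  assumes T: "tableau shape T" and ct: "content shape T = content shape (Ttab shape)"
  shows "level_entries T"
proof (rule ccontr)
  \<comment> \<open>entries dominate levels, while equal contents have equal sums of entries\<close>
  assume "\<not> level_entries T"
  then obtain c where c: "c \<in> shape" "fst (T c) \<noteq> level c" by (auto simp: level_entries_def)
  have le: "\<forall>c\<in>shape. fst (Ttab shape c) \<le> fst (T c)" using level_le_entry[OF T] Ttab_shape by simp
  have lt: "fst (Ttab shape c) < fst (T c)" using c level_le_entry[OF T c(1)] Ttab_shape by simp
  have "(\<Sum>c\<in>shape. fst (Ttab shape c)) < (\<Sum>c\<in>shape. fst (T c))"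
    by (rule sum_strict_mono_ex1) (use le lt c in auto)
  moreover have "(\<Sum>c\<in>shape. fst (Ttab shape c)) = (\<Sum>c\<in>shape. fst (T c))"
  proof -
    have p1: "\<forall>c\<in>shape. 1 \<le> fst (Ttab shape c)" using Ttab_shape level_pos by simp
    have p2: "\<forall>c\<in>shape. 1 \<le> fst (T c)" using tableau_fst_pos[OF T] by simp
    show ?thesis
      using sum_entries_content[OF finite_shape p1] sum_entries_content[OF finite_shape p2] ct
      by simp
  qed
  ultimately show False by simp
qed

lemma shape_cell_pair:
  "(i,j) \<in> shape \<Longrightarrow> (i,j) = cell (j-i) (level (i,j)) \<and> (j-i) \<in> long_diags (level (i,j))"
  using shape_cell[of "(i,j)"] by (simp add: diag_def)

lemma row_equal_levels:
  assumes c1: "(i,j) \<in> shape" and c2: "(i,j') \<in> shape" and jj: "j < j'" and bb: "b (j'-i) = b (j-i)"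
  shows "linked (j'-i) (level (i,j')) \<and> \<not> forced_mark (j'-i) (level (i,j'))"
proof -
  have ij: "i \<le> j" "i \<le> j'" using c1 c2 by (auto simp: shape_def)
  have q: "j-i \<le> j'-i-1" "j'-i-1 \<le> j'-i" using jj ij by auto
  have b1: "b (j'-i-1) = b (j'-i)"
    using b_antimono[OF q(1)] b_antimono[OF q(2)] bb by linarith
  have a1: "a (j'-i) \<le> a (j'-i-1)" using a_antimono[of "j'-i-1" "j'-i"] by auto
  have i2: "i \<le> a (j'-i-1)" "b (j'-i) < i" using c2 a1 by (auto simp: shape_def)
  show ?thesis using b1 i2 jj ij
    by (auto simp: linked_def forced_mark_def diag_len_def level_def diag_def)
qed

lemma column_equal_levels:
  assumes c1: "(i,j) \<in> shape" and c2: "(i',j) \<in> shape" and ii: "i < i'"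
    and vv: "level (i,j) = level (i',j)"
  shows "linked (j-i) (level (i,j)) \<and> forced_mark (j-i) (level (i,j))"
proof -
  have ij: "i' \<le> j" "i \<le> j" "b (j-i) < i" "b (j-i') < i'" "i' \<le> a (j-i')"
    using c1 c2 by (auto simp: shape_def)
  obtain p where p: "i' = i + Suc p" using less_imp_Suc_add[OF ii] by auto
  define e' where "e' = j - i'"
  have ee: "j - i = e' + Suc p" using p ij unfolding e'_def by simp
  have em: "j - i - 1 = e' + p" using ee by simp
  have h: "i - b (e' + Suc p) = i' - b e'" using vv ee by (simp add: level_def diag_def e'_def)
  have bi: "b (e' + Suc p) < i" using ij(3) ee by simp
  have bi': "b e' < i'" using ij(4) unfolding e'_def by simp
  have bv: "b e' = b (e' + Suc p) + Suc p" using h bi bi' p by arith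
  have l1: "b e' \<le> b (e'+p) + p" using b_le_shift[of e' "e'+p"] by simp
  have l2: "b (e'+p) \<le> Suc (b (e' + Suc p))" using b_le_Suc[of "e'+p"] by simp
  have b1: "b (e'+p) = Suc (b (e' + Suc p))" using l1 l2 bv by linarith
  have l3: "a e' \<le> a (e'+p) + p" using a_le_shift[of e' "e'+p"] by simp
  have a5: "i' \<le> a e'" using ij(5) unfolding e'_def by simp
  have a1: "i + 1 \<le> a (e'+p)" using l3 a5 p by linarith
  show ?thesis unfolding linked_def forced_mark_def diag_len_def level_def diag_def
    using b1 a1 bi by (simp add: ee em)
qed

lemma tableau_linked_same_row:
  assumes g: "level_entries T" and T: "tableau shape T" and dS: "d \<in> long_diags k"
    and ns: "linked d k" and row: "b d = b (d-1)"
  shows "\<not> snd (T (cell d k))"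
proof
  assume m: "snd (T (cell d k))"
  have k: "1 \<le> k" and d0: "0 < d" and dS': "d - 1 \<in> long_diags k"
    using dS ns by (auto simp: linked_def long_diags_def)
  have c: "cell d k \<in> shape" "cell (d-1) k \<in> shape" using cell_in_shape dS dS' by auto
  have f: "fst (T (cell d k)) = k" "fst (T (cell (d-1) k)) = k"
    using g c by (auto simp: level_entries_def)
  have e: "cell (d-1) k = (b d + k, b d + k + (d-1))" "cell d k = (b d + k, b d + k + d)"
    using row by (simp_all add: cell_def)
  have "rank (T (cell (d-1) k)) \<le> rank (T (cell d k))"
    using T c unfolding tableau_def e by auto
  then have m2: "snd (T (cell (d-1) k))" using rank_le_marked f k m by simp
  then have "T (cell (d-1) k) = T (cell d k)" using m f by (simp add: prod_eq_iff)
  moreover have "b d + k + (d-1) \<noteq> b d + k + d" using d0 by simp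
  ultimately show False using T c m2 unfolding tableau_def e by blast
qed

lemma tableau_linked_same_column:
  assumes g: "level_entries T" and T: "tableau shape T" and dS: "d \<in> long_diags k"
    and ns: "linked d k" and column: "b d \<noteq> b (d-1)"
  shows "snd (T (cell d k))"
proof (rule ccontr)
  assume m: "\<not> snd (T (cell d k))"
  have k: "1 \<le> k" and d0: "0 < d" and dS': "d - 1 \<in> long_diags k"
    using dS ns by (auto simp: linked_def long_diags_def)
  have c: "cell d k \<in> shape" "cell (d-1) k \<in> shape" using cell_in_shape dS dS' by auto
  have f: "fst (T (cell d k)) = k" "fst (T (cell (d-1) k)) = k"
    using g c by (auto simp: level_entries_def)
  have "b (d-1) = Suc (b d)" using column b_le_Suc[of "d-1"] b_Suc_le[of "d-1"] d0 by simp
  then have e: "cell (d-1) k = (b d + k + 1, b d + k + d)" "cell d k = (b d + k, b d + k + d)"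
    using d0 by (simp_all add: cell_def)
  have "rank (T (cell d k)) \<le> rank (T (cell (d-1) k))"
    using T c unfolding tableau_def e by auto
  then have m2: "\<not> snd (T (cell (d-1) k))" using rank_le_unmarked f k m by simp
  then have "T (cell (d-1) k) = T (cell d k)" using m f by (simp add: prod_eq_iff)
  moreover have "b d + k + 1 \<noteq> b d + k" by simp
  ultimately show False using T c m2 unfolding tableau_def e by blast
qed

lemma tableau_marks_forced:
  assumes "level_entries T" "tableau shape T" "d \<in> long_diags k" "linked d k"
  shows "snd (T (cell d k)) = forced_mark d k"
  using tableau_linked_same_row[OF assms] tableau_linked_same_column[OF assms] assms(4)
  by (auto simp: forced_mark_def)

definition marks_forced :: "((nat \<times> nat) \<Rightarrow> letter) \<Rightarrow> bool" where
  "marks_forced T \<longleftrightarrow>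
     (\<forall>d k. d \<in> long_diags k \<longrightarrow> linked d k \<longrightarrow> snd (T (cell d k)) = forced_mark d k)"

lemma marks_forced_pair:
  "marks_forced T \<Longrightarrow> (i,j) \<in> shape \<Longrightarrow> linked (j-i) (level (i,j)) \<Longrightarrow>
   snd (T (i,j)) = forced_mark (j-i) (level (i,j))"
  using shape_cell_pair[of i j] unfolding marks_forced_def by metis

lemma level_row_mono:
  assumes "(i,j) \<in> shape" "(i,j') \<in> shape" "j \<le> j'"
  shows "level (i,j) \<le> level (i,j')"
proof -
  have "b (j'-i) \<le> b (j-i)" using b_antimono[of "j-i" "j'-i"] assms(3) by simp
  then show ?thesis by (simp add: level_def diag_def diff_le_mono2)
qed

lemma level_column_mono:
  assumes "(i,j) \<in> shape" "(i',j) \<in> shape" "i \<le> i'"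
  shows "level (i,j) \<le> level (i',j)"
proof -
  have "b (j-i') \<le> b (j-i) + ((j-i) - (j-i'))" using b_le_shift[of "j-i'" "j-i"] assms(3) by auto
  then show ?thesis using assms by (auto simp: level_def diag_def shape_def)
qed

lemma marks_forced_row_unmarked:
  assumes fm: "marks_forced T" and c1: "(i,j) \<in> shape" and c2: "(i,j') \<in> shape" and "j < j'"
    and "level (i,j) = level (i,j')"
  shows "\<not> snd (T (i,j'))"
proof -
  have "i - b (j-i) = i - b (j'-i)" "b (j-i) < i" "b (j'-i) < i"
    using assms by (auto simp: level_def diag_def shape_def)
  then have "b (j'-i) = b (j-i)" by arith
  then show ?thesis using row_equal_levels[OF c1 c2 \<open>j < j'\<close>] marks_forced_pair[OF fm c2] by auto
qed

lemma marks_forced_column_marked: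
  assumes "marks_forced T" "(i,j) \<in> shape" "(i',j) \<in> shape" "i < i'" "level (i,j) = level (i',j)"
  shows "snd (T (i,j))"
  using column_equal_levels[OF assms(2-5)] marks_forced_pair[OF assms(1,2)] by auto

lemma marks_forced_row_rank_mono:
  assumes g: "level_entries T" and fm: "marks_forced T"
    and c1: "(i,j) \<in> shape" and c2: "(i,j') \<in> shape" and jj: "j \<le> j'"
  shows "rank (T (i,j)) \<le> rank (T (i,j'))"
proof -
  have fv: "fst (T (i,j)) = level (i,j)" "fst (T (i,j')) = level (i,j')"
    using g c1 c2 by (auto simp: level_entries_def)
  show ?thesis
  proof (cases "level (i,j) = level (i,j') \<and> j \<noteq> j'")
    case True
    then have "\<not> snd (T (i,j'))" using marks_forced_row_unmarked[OF fm c1 c2] jj by simp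
    then show ?thesis
      using rank_same_fst_le[of "T (i,j')" "T (i,j)"] fv level_pos[OF c1] True by auto
  next
    case False
    then show ?thesis
      using level_row_mono[OF c1 c2 jj] fv fst_less_imp_rank_less[of "T (i,j)" "T (i,j')"] by force
  qed
qed

lemma marks_forced_column_rank_mono:
  assumes g: "level_entries T" and fm: "marks_forced T"
    and c1: "(i,j) \<in> shape" and c2: "(i',j) \<in> shape" and ii: "i \<le> i'"
  shows "rank (T (i,j)) \<le> rank (T (i',j))"
proof -
  have fv: "fst (T (i,j)) = level (i,j)" "fst (T (i',j)) = level (i',j)"
    using g c1 c2 by (auto simp: level_entries_def)
  show ?thesis
  proof (cases "level (i,j) = level (i',j) \<and> i \<noteq> i'")
    case True
    then have "snd (T (i,j))" using marks_forced_column_marked[OF fm c1 c2] ii by simp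
    then show ?thesis
      using rank_same_fst_le[of "T (i',j)" "T (i,j)"] fv level_pos[OF c1] True by auto
  next
    case False
    then show ?thesis
      using level_column_mono[OF c1 c2 ii] fv fst_less_imp_rank_less[of "T (i,j)" "T (i',j)"]
      by force
  qed
qed

lemma marks_forced_tableau:
  assumes g: "level_entries T" and fm: "marks_forced T"
  shows "tableau shape T"
  unfolding tableau_def
proof (intro conjI allI impI ballI)
  have fv: "\<And>c. c \<in> shape \<Longrightarrow> fst (T c) = level c" using g by (simp add: level_entries_def)
  fix c assume "c \<in> shape" then show "1 \<le> fst (T c)" using fv level_pos by simp
next
  fix i j j' assume "(i,j) \<in> shape" "(i,j') \<in> shape" "j \<le> j'"
  then show "rank (T (i,j)) \<le> rank (T (i,j'))" by (rule marks_forced_row_rank_mono[OF g fm])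
next
  fix i i' j assume "(i,j) \<in> shape" "(i',j) \<in> shape" "i \<le> i'"
  then show "rank (T (i,j)) \<le> rank (T (i',j))" by (rule marks_forced_column_rank_mono[OF g fm])
next
  fix i i' j assume c1: "(i,j) \<in> shape" and c2: "(i',j) \<in> shape" and "i \<noteq> i'"
    and eq: "T (i,j) = T (i',j)"
  then have "level (i,j) = level (i',j)" using g by (metis level_entries_def)
  then show "snd (T (i,j))"
    using marks_forced_column_marked[OF fm c1 c2] marks_forced_column_marked[OF fm c2 c1]
      eq \<open>i \<noteq> i'\<close>
    by (cases "i < i'") auto
next
  fix i j j' assume c1: "(i,j) \<in> shape" and c2: "(i,j') \<in> shape" and "j \<noteq> j'"
    and eq: "T (i,j) = T (i,j')"
  then have "level (i,j) = level (i,j')" using g by (metis level_entries_def)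
  then show "\<not> snd (T (i,j))"
    using marks_forced_row_unmarked[OF fm c1 c2] marks_forced_row_unmarked[OF fm c2 c1] eq \<open>j \<noteq> j'\<close>
    by (cases "j < j'") auto
qed

lemma tableau_iff_marks_forced: "level_entries T \<Longrightarrow> tableau shape T \<longleftrightarrow> marks_forced T"
  using marks_forced_tableau tableau_marks_forced unfolding marks_forced_def by blast

definition marked :: "((nat \<times> nat) \<Rightarrow> letter) \<Rightarrow> nat \<Rightarrow> nat \<Rightarrow> bool" where
  "marked T d i \<longleftrightarrow> snd (T (cell d i))"

definition leftmost_unmarked :: "((nat \<times> nat) \<Rightarrow> letter) \<Rightarrow> bool" where
  "leftmost_unmarked T \<longleftrightarrow>
     (\<forall>i d. d \<in> long_diags i \<longrightarrow> (\<forall>d'<d. d' \<notin> long_diags i) \<longrightarrow> \<not> marked T d i)"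

lemma marks_forced_marked:
  "marks_forced T \<Longrightarrow> d \<in> long_diags i \<Longrightarrow> linked d i \<Longrightarrow> marked T d i \<longleftrightarrow> b d \<noteq> b (d-1)"
  unfolding marks_forced_def marked_def forced_mark_def by auto

lemma long_diags_antimono: "k' \<le> k \<Longrightarrow> 0 < k' \<Longrightarrow> long_diags k \<subseteq> long_diags k'"
  by (auto simp: long_diags_def)

lemma long_diags_less: "d \<in> long_diags i \<Longrightarrow> d < W"
  using long_diags_bounded by auto

lemma finite_below_W: "(\<And>e. Q e \<Longrightarrow> e < W) \<Longrightarrow> finite {e. Q e}"
  by (rule finite_subset[of _ "{..<W}"]) auto

lemma long_diags_next: "2 \<le> k \<Longrightarrow> 0 < d \<Longrightarrow> d - 1 \<in> long_diags k \<Longrightarrow> d \<in> long_diags (k-1)"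
  using a_le_Suc[of "d-1"] b_Suc_le[of "d-1"] by (cases d) (auto simp: long_diags_def diag_len_def)

lemma b_step_if_diag_len_increases:
  "0 < d \<Longrightarrow> diag_len (d-1) < k \<Longrightarrow> k \<le> diag_len d \<Longrightarrow> b d \<noteq> b (d-1)"
  using a_Suc_le[of "d-1"] by (cases d) (auto simp: diag_len_def)

lemma unmarked_where_diag_len_drops:
  assumes "marks_forced T" "d \<in> long_diags (k-1)" "d \<notin> long_diags k" "0 < d" "d - 1 \<in> long_diags k"
  shows "\<not> marked T d (k-1)"
proof -
  have "linked d (k-1)" using assms(4,5) by (auto simp: linked_def long_diags_def)
  moreover have "b d = b (d-1)"
    using assms(3-5) a_le_Suc[of "d-1"] b_le_Suc[of "d-1"] b_Suc_le[of "d-1"] b_le_a[of "d-1"]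
    by (cases d) (auto simp: long_diags_def diag_len_def)
  ultimately show ?thesis using marks_forced_marked[OF assms(1,2)] by simp
qed

lemma marked_eq_pred_level:
  assumes "marks_forced T" "d \<in> long_diags k" "d \<in> long_diags (k-1)" "0 < d" "d - 1 \<in> long_diags k"
  shows "marked T d k \<longleftrightarrow> marked T d (k-1)"
proof -
  have "linked d k" "linked d (k-1)" using assms(4,5) by (auto simp: linked_def long_diags_def)
  then show ?thesis
    using marks_forced_marked[OF assms(1,2)] marks_forced_marked[OF assms(1,3)] by simp
qed

definition n_unmarked :: "((nat \<times> nat) \<Rightarrow> letter) \<Rightarrow> nat \<Rightarrow> nat \<Rightarrow> nat" where
  "n_unmarked T i lo = card {d. d \<in> long_diags i \<and> \<not> marked T d i \<and> lo \<le> d}"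

definition n_marked :: "((nat \<times> nat) \<Rightarrow> letter) \<Rightarrow> nat \<Rightarrow> nat \<Rightarrow> nat" where
  "n_marked T i lo = card {d. d \<in> long_diags i \<and> marked T d i \<and> lo \<le> d}"

definition n_dropped :: "nat \<Rightarrow> nat \<Rightarrow> nat" where
  "n_dropped k lo = card {d. d \<in> long_diags (k-1) \<and> d \<notin> long_diags k \<and> lo \<le> d}"

lemma n_unmarked_rec:
  "n_unmarked T i d = n_unmarked T i (Suc d) + (if d \<in> long_diags i \<and> \<not> marked T d i then 1 else 0)"
  unfolding n_unmarked_def using card_ge_Suc_split[of "\<lambda>d. d \<in> long_diags i \<and> \<not> marked T d i" d]
  by (simp add: conj_assoc)

lemma n_marked_rec:
  "n_marked T i d = n_marked T i (Suc d) + (if d \<in> long_diags i \<and> marked T d i then 1 else 0)"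
  unfolding n_marked_def using card_ge_Suc_split[of "\<lambda>d. d \<in> long_diags i \<and> marked T d i" d]
  by (simp add: conj_assoc)

lemma n_dropped_rec:
  "n_dropped k d = n_dropped k (Suc d) + (if d \<in> long_diags (k-1) \<and> d \<notin> long_diags k then 1 else 0)"
  unfolding n_dropped_def
    using card_ge_Suc_split[of "\<lambda>d. d \<in> long_diags (k-1) \<and> d \<notin> long_diags k" d]
  by (simp add: conj_assoc)

lemma n_unmarked_W: "W \<le> d \<Longrightarrow> n_unmarked T i d = 0"
  unfolding n_unmarked_def using long_diags_less by fastforce

lemma n_marked_W: "W \<le> d \<Longrightarrow> n_marked T i d = 0"
  unfolding n_marked_def using long_diags_less by fastforce

lemma n_dropped_W: "W \<le> d \<Longrightarrow> n_dropped k d = 0"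
  unfolding n_dropped_def using long_diags_less by fastforce

lemma n_unmarked_antimono: "lo \<le> lo' \<Longrightarrow> n_unmarked T i lo' \<le> n_unmarked T i lo"
  unfolding n_unmarked_def by (rule card_mono) (auto intro: finite_below_W simp: long_diags_less)

lemma n_dropped_antimono: "lo \<le> lo' \<Longrightarrow> n_dropped k lo' \<le> n_dropped k lo"
  unfolding n_dropped_def by (rule card_mono) (auto intro: finite_below_W simp: long_diags_less)

lemma n_unmarked_plus_marked: "n_unmarked T i 0 + n_marked T i 0 = card (long_diags i)"
proof -
  have "card (long_diags i) =
        card {d \<in> long_diags i. \<not> marked T d i} + card {d \<in> long_diags i. marked T d i}"
    by (subst card_Un_disjoint[symmetric]) (auto intro: arg_cong[where f = card])
  then show ?thesis by (simp add: n_unmarked_def n_marked_def)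
qed

lemma card_long_diags_pred: "2 \<le> k \<Longrightarrow> card (long_diags (k-1)) = card (long_diags k) + n_dropped k 0"
proof -
  assume k: "2 \<le> k"
  have sub: "long_diags k \<subseteq> long_diags (k-1)" using long_diags_antimono[of "k-1" k] k by simp
  have "{d. d \<in> long_diags (k-1) \<and> d \<notin> long_diags k \<and> 0 \<le> d} = long_diags (k-1) - long_diags k"
    by auto
  then show ?thesis using sub by (simp add: n_dropped_def card_Diff_subset card_mono)
qed

lemma n_marked_split:
  "card {d. d \<in> long_diags i \<and> marked T d i \<and> d < d0} + n_marked T i d0 = n_marked T i 0"
  unfolding n_marked_def using card_split_below[of "\<lambda>d. d \<in> long_diags i \<and> marked T d i" d0]
  by (simp add: conj_assoc)

text \<open>Scanning the diagonals from right to left, the unmarked letters \<open>k - 1\<close> stay ahead of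
  the unmarked letters \<open>k\<close>, and the marked letters \<open>k\<close> together with the diagonals of length
  \<open>k - 1\<close> stay ahead of the marked letters \<open>k - 1\<close>; in both cases with one to spare once
  \<open>P\<^sub>k\<close> also meets the diagonal \<open>d - 1\<close>.\<close>

lemma n_unmarked_excess:
  assumes fm: "marks_forced T" and k: "2 \<le> k"
  shows "n_unmarked T k d + (if 0 < d \<and> d - 1 \<in> long_diags k then 1 else 0) \<le> n_unmarked T (k-1) d"
proof (induction d rule: downward_induct[where N="Suc W"])
  case (1 d)
  then have "d - 1 \<notin> long_diags k" using long_diags_less by fastforce
  then show ?case using 1 by (simp add: n_unmarked_W)
next
  case (2 d)
  then have IH: "n_unmarked T k (Suc d) + (if d \<in> long_diags k then 1 else 0) \<le>
                 n_unmarked T (k-1) (Suc d)"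
    by simp
  have sub: "d \<in> long_diags k \<Longrightarrow> d \<in> long_diags (k-1)"
    using long_diags_antimono[of "k-1" k] k by auto
  show ?case
    using IH n_unmarked_rec[of T k d] n_unmarked_rec[of T "k-1" d] sub long_diags_next[OF k, of d]
      unmarked_where_diag_len_drops[OF fm, of d k] marked_eq_pred_level[OF fm, of d k]
    by (auto split: if_splits)
qed

lemma n_marked_deficit:
  assumes fm: "marks_forced T" and fu: "leftmost_unmarked T" and k: "2 \<le> k"
  shows "n_marked T (k-1) d + (if 0 < d \<and> d - 1 \<in> long_diags k then 1 else 0) \<le>
         n_marked T k d + n_dropped k d"
proof (induction d rule: downward_induct[where N="Suc W"])
  case (1 d)
  then have "d - 1 \<notin> long_diags k" using long_diags_less by fastforce
  then show ?case using 1 by (simp add: n_marked_W n_dropped_W)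
next
  case (2 d)
  then have IH: "n_marked T (k-1) (Suc d) + (if d \<in> long_diags k then 1 else 0) \<le>
                 n_marked T k (Suc d) + n_dropped k (Suc d)"
    by simp
  have sub: "d \<in> long_diags k \<Longrightarrow> d \<in> long_diags (k-1)"
    using long_diags_antimono[of "k-1" k] k by auto
  have first: "d = 0 \<Longrightarrow> d \<in> long_diags i \<Longrightarrow> \<not> marked T d i" for i
    using fu unfolding leftmost_unmarked_def by auto
  show ?case
    using IH n_marked_rec[of T k d] n_marked_rec[of T "k-1" d] n_dropped_rec[of k d] sub first
      long_diags_next[OF k, of d] unmarked_where_diag_len_drops[OF fm, of d k]
      marked_eq_pred_level[OF fm, of d k]
    by (auto split: if_splits)
qed

subsection \<open>Amenability\<close>

lemma reads_before_same_level: "reads_before (cell d k) (cell d' k) \<longleftrightarrow> d < d'"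
proof
  assume "reads_before (cell d k) (cell d' k)"
  then have "b d' < b d \<or> (b d = b d' \<and> d < d')" by (auto simp: reads_before_def cell_def)
  then show "d < d'" using b_antimono[of d' d] by (cases "d' \<le> d") auto
next
  assume "d < d'"
  then show "reads_before (cell d k) (cell d' k)"
    using b_antimono[of d d'] by (auto simp: reads_before_def cell_def)
qed

lemma reads_before_pred_level: "1 \<le> k \<Longrightarrow> reads_before (cell e (k-1)) (cell d k) \<longleftrightarrow> b d < b e"
proof
  assume "1 \<le> k" and "reads_before (cell e (k-1)) (cell d k)"
  then show "b d < b e" by (auto simp: reads_before_def cell_def)
next
  assume k: "1 \<le> k" and h: "b d < b e"
  then have "e < d" using b_antimono[of d e] by (cases "d \<le> e") auto
  then show "reads_before (cell e (k-1)) (cell d k)"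
    using h k by (auto simp: reads_before_def cell_def)
qed

lemma reads_before_level_pred: "1 \<le> k \<Longrightarrow> reads_before (cell d k) (cell e (k-1)) \<longleftrightarrow> b e \<le> b d"
proof
  assume "1 \<le> k" and "reads_before (cell d k) (cell e (k-1))"
  then have "b e \<le> b d \<or> (b e = Suc (b d) \<and> d < e)" by (auto simp: reads_before_def cell_def)
  then show "b e \<le> b d" using b_antimono[of d e] by auto
next
  assume "1 \<le> k" and "b e \<le> b d"
  then show "reads_before (cell d k) (cell e (k-1))" by (auto simp: reads_before_def cell_def)
qed

lemma level_entry_cell:
  assumes "level_entries T" "c \<in> shape" "fst (T c) = i"
  obtains d where "c = cell d i" "d \<in> long_diags i"
  using assms shape_cell[OF assms(2)] by (auto simp: level_entries_def)

lemma card_level_cells: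
  assumes g: "level_entries T" and i: "0 < i"
  shows "card {c\<in>shape. P c \<and> T c = (i,m)} =
         card {d. d \<in> long_diags i \<and> P (cell d i) \<and> marked T d i = m}"
proof -
  have "{c\<in>shape. P c \<and> T c = (i,m)} =
        (\<lambda>d. cell d i) ` {d. d \<in> long_diags i \<and> P (cell d i) \<and> marked T d i = m}"
  proof (rule set_eqI; rule iffI)
    fix c assume c: "c \<in> {c\<in>shape. P c \<and> T c = (i,m)}"
    then have "level c = i" using g by (auto simp: level_entries_def)
    then have "c = cell (diag c) i" "diag c \<in> long_diags i" using shape_cell[of c] c by auto
    then show "c \<in> (\<lambda>d. cell d i) ` {d. d \<in> long_diags i \<and> P (cell d i) \<and> marked T d i = m}"
      using c by (intro image_eqI[of _ _ "diag c"]) (auto simp: marked_def)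
  next
    fix c assume "c \<in> (\<lambda>d. cell d i) ` {d. d \<in> long_diags i \<and> P (cell d i) \<and> marked T d i = m}"
    then obtain d where d: "c = cell d i" "d \<in> long_diags i" "P (cell d i)" "marked T d i = m"
      by auto
    have "cell d i \<in> shape" using cell_in_shape d by simp
    moreover then have "fst (T (cell d i)) = i" using g by (auto simp: level_entries_def)
    ultimately show "c \<in> {c\<in>shape. P c \<and> T c = (i,m)}" unfolding d(1) using d(3,4)
      by (simp add: marked_def prod_eq_iff)
  qed
  moreover have "inj_on (\<lambda>d. cell d i) X" for X using cell_inj by (auto simp: inj_on_def)
  ultimately show ?thesis by (simp add: card_image)
qed

lemma card_unmarked_level:
  "level_entries T \<Longrightarrow> 0 < i \<Longrightarrow> card {c\<in>shape. T c = (i,False)} = n_unmarked T i 0"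
  using card_level_cells[of T i "\<lambda>_. True" False] by (simp add: n_unmarked_def)

lemma suffix_condition_holds:
  assumes g: "level_entries T" and fm: "marks_forced T" and k: "2 \<le> k"
  shows "suffix_condition k shape T"
  unfolding suffix_condition_def
proof (intro ballI impI)
  fix c0 assume c0: "c0 \<in> shape" "fst (T c0) = k"
  then obtain d0 where d0: "c0 = cell d0 k" "d0 \<in> long_diags k"
    using level_entry_cell[OF g] by metis
  have k0: "0 < k" "0 < k - 1" using k by auto
  let ?after_pred = "{e. e \<in> long_diags (k-1) \<and> b e \<le> b d0 \<and> \<not> marked T e (k-1)}"
  have L: "card {c\<in>shape. reads_before c0 c \<and> T c = (k,False)} = n_unmarked T k (Suc d0)"
    unfolding card_level_cells[OF g k0(1)] d0(1) reads_before_same_level n_unmarked_def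
    by (rule arg_cong[where f=card]) auto
  have R: "card {c\<in>shape. reads_before c0 c \<and> T c = (k-1,False)} = card ?after_pred"
    unfolding card_level_cells[OF g k0(2)] d0(1) using reads_before_level_pred[of k d0] k by simp
  have "n_unmarked T (k-1) d0 \<le> card ?after_pred"
    unfolding n_unmarked_def
    by (rule card_mono) (auto intro: finite_below_W simp: long_diags_less b_antimono)
  moreover have "n_unmarked T (k-1) (Suc d0) \<le> n_unmarked T (k-1) d0"
    by (rule n_unmarked_antimono) simp
  moreover have "n_unmarked T k (Suc d0) + 1 \<le> n_unmarked T (k-1) (Suc d0)"
    using n_unmarked_excess[OF fm k, of "Suc d0"] d0 by simp
  ultimately show "card {c\<in>shape. reads_before c0 c \<and> T c = (k,False)} \<noteq>
                   card {c\<in>shape. reads_before c0 c \<and> T c = (k-1,False)}"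
    using L R by linarith
qed

text \<open>The letters \<open>k\<close> and \<open>k - 1\<close> fill exactly the diagonals of length \<open>\<ge> k\<close> and
  \<open>\<ge> k - 1\<close>, so condition (b) at a cell reduces to an inequality between the marked cells
  that are not yet read.\<close>

lemma prefix_condition_cellI:
  assumes g: "level_entries T" and k: "2 \<le> k"
    and marked_k: "card {c\<in>shape. reads_before c c0 \<and> T c = (k,True)} =
                   card {d. d \<in> long_diags k \<and> marked T d k \<and> d < p}"
    and marked_pred: "card {c\<in>shape. reads_before c c0 \<and> T c = (k-1,True)} =
                      card {d. d \<in> long_diags (k-1) \<and> marked T d (k-1) \<and> d < q}"
    and tails: "n_marked T (k-1) q < n_marked T k p + n_dropped k 0"
  shows "card {c\<in>shape. T c = (k,False)} + card {c\<in>shape. reads_before c c0 \<and> T c = (k,True)} \<noteq>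
         card {c\<in>shape. T c = (k-1,False)} + card {c\<in>shape. reads_before c c0 \<and> T c = (k-1,True)}"
proof -
  have k0: "0 < k" "0 < k - 1" using k by auto
  show ?thesis
    using card_unmarked_level[OF g k0(1)] card_unmarked_level[OF g k0(2)] marked_k marked_pred tails
      n_marked_split[of k T p] n_marked_split[of "k-1" T q] card_long_diags_pred[OF k]
      n_unmarked_plus_marked[of T k] n_unmarked_plus_marked[of T "k-1"]
    by linarith
qed

lemma marked_cell_b_step:
  assumes fm: "marks_forced T" and fu: "leftmost_unmarked T"
    and d0: "d0 \<in> long_diags k" and m: "marked T d0 k"
  shows "0 < d0 \<and> b d0 \<noteq> b (d0-1)"
proof (cases "linked d0 k")
  case True then show ?thesis using marks_forced_marked[OF fm d0 True] m by (simp add: linked_def)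
next
  case False
  have "d0 \<noteq> 0" using fu d0 m unfolding leftmost_unmarked_def by auto
  then show ?thesis
    using False b_step_if_diag_len_increases[of d0 k] d0 by (auto simp: linked_def long_diags_def)
qed

lemma n_marked_tail_at_marked:
  assumes fm: "marks_forced T" and fu: "leftmost_unmarked T" and k: "2 \<le> k"
    and d0: "d0 \<in> long_diags k" and m: "marked T d0 k"
  shows "n_marked T (k-1) d0 < n_marked T k d0 + n_dropped k 0"
proof -
  have "n_marked T (k-1) (Suc d0) + 1 \<le> n_marked T k (Suc d0) + n_dropped k (Suc d0)"
    using n_marked_deficit[OF fm fu k, of "Suc d0"] d0 by simp
  moreover have "n_marked T k d0 = n_marked T k (Suc d0) + 1"
    using n_marked_rec[of T k d0] d0 m by simp
  moreover have "n_marked T (k-1) d0 \<le> n_marked T (k-1) (Suc d0) + 1"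
    using n_marked_rec[of T "k-1" d0] by simp
  moreover have "n_dropped k (Suc d0) \<le> n_dropped k 0" by (rule n_dropped_antimono) simp
  ultimately show ?thesis by linarith
qed

lemma marked_reads_before_unmarked:
  assumes fm: "marks_forced T"
  shows "{d. d \<in> long_diags k \<and> b e0 \<le> b d \<and> marked T d k} =
         {d. d \<in> long_diags k \<and> marked T d k \<and> d < Suc e0}"
proof (rule set_eqI; rule iffI)
  fix d assume "d \<in> {d. d \<in> long_diags k \<and> b e0 \<le> b d \<and> marked T d k}"
  then have d: "d \<in> long_diags k" "b e0 \<le> b d" "marked T d k" by auto
  have "d \<le> e0"
  proof (rule ccontr)
    assume "\<not> d \<le> e0"
    then have de: "e0 \<le> d - 1" "0 < d" by auto
    then have "b d = b (d-1)"
      using b_antimono[of "d-1" d] b_antimono[OF de(1)] d(2) by auto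
    then show False
      using marks_forced_marked[OF fm d(1)] d(3) b_step_if_diag_len_increases[of d k] de(2) d(1)
      by (cases "linked d k") (auto simp: linked_def long_diags_def)
  qed
  then show "d \<in> {d. d \<in> long_diags k \<and> marked T d k \<and> d < Suc e0}" using d by auto
next
  fix d assume "d \<in> {d. d \<in> long_diags k \<and> marked T d k \<and> d < Suc e0}"
  then show "d \<in> {d. d \<in> long_diags k \<and> b e0 \<le> b d \<and> marked T d k}"
    using b_antimono[of d e0] by auto
qed

lemma n_marked_tail_at_unmarked:
  assumes fm: "marks_forced T" and fu: "leftmost_unmarked T" and k: "2 \<le> k"
    and e0: "e0 \<in> long_diags (k-1)" and u: "\<not> marked T e0 (k-1)"
  shows "n_marked T (k-1) e0 < n_marked T k (Suc e0) + n_dropped k 0"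
proof -
  have "n_marked T (k-1) e0 = n_marked T (k-1) (Suc e0)" using n_marked_rec[of T "k-1" e0] u by simp
  moreover have "n_dropped k (Suc e0) + (if e0 \<notin> long_diags k then 1 else 0) \<le> n_dropped k 0"
    using n_dropped_rec[of k e0] n_dropped_antimono[of 0 e0 k] e0 by (auto split: if_splits)
  ultimately show ?thesis
    using n_marked_deficit[OF fm fu k, of "Suc e0"] by (auto split: if_splits)
qed

lemma prefix_condition_holds:
  assumes g: "level_entries T" and fm: "marks_forced T" and fu: "leftmost_unmarked T" and k: "2 \<le> k"
  shows "prefix_condition k shape T"
  unfolding prefix_condition_def
proof (intro ballI impI)
  fix c0 assume c0: "c0 \<in> shape" and tc: "T c0 = (k-1,False) \<or> T c0 = (k,True)"
  have k0: "0 < k" "0 < k - 1" "1 \<le> k" using k by auto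
  show "card {c\<in>shape. T c = (k,False)} + card {c\<in>shape. reads_before c c0 \<and> T c = (k,True)} \<noteq>
        card {c\<in>shape. T c = (k-1,False)} + card {c\<in>shape. reads_before c c0 \<and> T c = (k-1,True)}"
  proof (cases "T c0 = (k,True)")
    case True
    obtain d0 where d0: "c0 = cell d0 k" "d0 \<in> long_diags k"
      using level_entry_cell[OF g c0, of k] True by auto
    have m: "marked T d0 k" using True d0 by (simp add: marked_def)
    have step: "0 < d0 \<and> b d0 \<noteq> b (d0-1)" using marked_cell_b_step[OF fm fu d0(2) m] .
    have "e < d0 \<longleftrightarrow> b d0 < b e" for e
    proof
      assume "e < d0"
      then have "b (d0-1) \<le> b e" "b d0 \<le> b (d0-1)" using b_antimono by auto
      then show "b d0 < b e" using step by linarith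
    next
      assume "b d0 < b e" then show "e < d0" using b_antimono[of d0 e] by (cases "d0 \<le> e") auto
    qed
    then show ?thesis
      by (intro prefix_condition_cellI[OF g k _ _ n_marked_tail_at_marked[OF fm fu k d0(2) m]])
        (unfold card_level_cells[OF g k0(1)] card_level_cells[OF g k0(2)] d0(1)
           reads_before_same_level reads_before_pred_level[OF k0(3)],
         auto intro: arg_cong[where f=card])
  next
    case False
    then have tc': "T c0 = (k-1,False)" using tc by simp
    obtain e0 where e0: "c0 = cell e0 (k-1)" "e0 \<in> long_diags (k-1)"
      using level_entry_cell[OF g c0, of "k-1"] tc' by auto
    have u: "\<not> marked T e0 (k-1)" using tc' e0 by (simp add: marked_def)
    show ?thesis
      by (intro prefix_condition_cellI[OF g k _ _ n_marked_tail_at_unmarked[OF fm fu k e0(2) u]])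
        (unfold card_level_cells[OF g k0(1)] card_level_cells[OF g k0(2)] e0(1)
           reads_before_level_pred[OF k0(3)] reads_before_same_level
           marked_reads_before_unmarked[OF fm, symmetric], auto intro: arg_cong[where f=card])
  qed
qed

lemma first_unmarked_condition_holds:
  assumes g: "level_entries T" and fu: "leftmost_unmarked T" and i: "0 < i"
  shows "first_unmarked_condition i shape T"
  unfolding first_unmarked_condition_def
proof (intro ballI impI)
  fix c0 assume c0: "c0 \<in> shape"
    and h: "fst (T c0) = i \<and> (\<forall>c\<in>shape. fst (T c) = i \<longrightarrow> \<not> reads_before c c0)"
  obtain d0 where d0: "c0 = cell d0 i" "d0 \<in> long_diags i" using level_entry_cell[OF g c0] h by auto
  have "\<forall>d'<d0. d' \<notin> long_diags i"
  proof (intro allI impI)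
    fix d' assume d': "d' < d0"
    show "d' \<notin> long_diags i"
    proof
      assume "d' \<in> long_diags i"
      then have "cell d' i \<in> shape" "fst (T (cell d' i)) = i"
        using cell_in_shape g by (auto simp: level_entries_def)
      then show False using h d' d0(1) reads_before_same_level by auto
    qed
  qed
  then have "\<not> marked T d0 i" using fu d0(2) unfolding leftmost_unmarked_def by blast
  then show "T c0 = (i, False)" using h unfolding d0(1) by (simp add: marked_def prod_eq_iff)
qed

lemma leftmost_unmarked_if_condition:
  assumes g: "level_entries T" and A: "\<And>i. 0 < i \<Longrightarrow> first_unmarked_condition i shape T"
  shows "leftmost_unmarked T"
  unfolding leftmost_unmarked_def
proof (intro allI impI)
  fix i d assume d: "d \<in> long_diags i" and fst: "\<forall>d'<d. d' \<notin> long_diags i"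
  have i: "0 < i" using d by (simp add: long_diags_def)
  have c: "cell d i \<in> shape" "fst (T (cell d i)) = i"
    using cell_in_shape[OF d] g by (auto simp: level_entries_def)
  have "\<forall>c\<in>shape. fst (T c) = i \<longrightarrow> \<not> reads_before c (cell d i)"
  proof (intro ballI impI)
    fix c assume "c \<in> shape" "fst (T c) = i"
    then obtain d' where "c = cell d' i" "d' \<in> long_diags i" using level_entry_cell[OF g] by blast
    then show "\<not> reads_before c (cell d i)" using fst reads_before_same_level by auto
  qed
  then have "T (cell d i) = (i, False)"
    using A[OF i] c unfolding first_unmarked_condition_def by blast
  then show "\<not> marked T d i" by (simp add: marked_def)
qed

lemma amenable_iff_leftmost_unmarked:
  assumes g: "level_entries T" and fm: "marks_forced T"
  shows "amenable shape T \<longleftrightarrow> leftmost_unmarked T"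
proof
  assume am: "amenable shape T"
  have "\<And>i. 0 < i \<Longrightarrow> first_unmarked_condition i shape T"
  proof -
    fix i :: nat assume "0 < i"
    then have "k_amenable (Suc i) (reading_word shape T)" using am unfolding amenable_def by simp
    then show "first_unmarked_condition i shape T"
      using k_amenable_first_unmarked[OF finite_shape] by fastforce
  qed
  then show "leftmost_unmarked T" using leftmost_unmarked_if_condition[OF g] by blast
next
  assume fu: "leftmost_unmarked T"
  show "amenable shape T" unfolding amenable_def
  proof (intro allI impI)
    fix k :: nat assume "1 < k"
    then have k: "2 \<le> k" by simp
    show "k_amenable k (reading_word shape T)"
      by (rule k_amenableI[OF finite_shape suffix_condition_holds[OF g fm k]
            prefix_condition_holds[OF g fm fu k] first_unmarked_condition_holds[OF g fu]
            first_unmarked_condition_holds[OF g fu]])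
        (use k in auto)
  qed
qed

text \<open>A run of \<open>P\<^sub>i\<close> is a maximal interval of diagonals whose \<open>i\<close>-th cells are linked;
  \<open>run_start i d\<close> is the first diagonal of the run containing \<open>d\<close>.\<close>

primrec run_start :: "nat \<Rightarrow> nat \<Rightarrow> nat" where
  "run_start i 0 = 0"
| "run_start i (Suc d) = (if linked (Suc d) i then run_start i d else Suc d)"

definition run_starts :: "nat \<Rightarrow> nat set" where
  "run_starts i = {d \<in> long_diags i. \<not> linked d i}"

definition Pk_adjacency :: "nat \<Rightarrow> ((nat \<times> nat) \<times> (nat \<times> nat)) set" where
  "Pk_adjacency i = {(x,y). x \<in> Pk shape i \<and> y \<in> Pk shape i \<and> adjacent x y}"

lemma Pk_cell: "0 < i \<Longrightarrow> x \<in> Pk shape i \<Longrightarrow> x = cell (diag x) i \<and> diag x \<in> long_diags i"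
  using Pk_eq_cells[of i] by auto

lemma adjacent_cells: "adjacent (cell d i) (cell d' i) \<Longrightarrow> d' = Suc d \<or> d = Suc d'"
  by (auto simp: adjacent_def cell_def)

lemma linked_cells_adjacent: "adjacent (cell (Suc d) i) (cell d i)"
proof (cases "b (Suc d) = b d")
  case True then show ?thesis by (simp add: adjacent_def cell_def)
next
  case False
  then have "b d = Suc (b (Suc d))" using b_le_Suc[of d] b_Suc_le[of d] by simp
  then show ?thesis by (simp add: adjacent_def cell_def)
qed

lemma run_start_props:
  "d \<in> long_diags i \<Longrightarrow>
   run_start i d \<in> run_starts i \<and> (cell d i, cell (run_start i d) i) \<in> (Pk_adjacency i)\<^sup>*"
proof (induction d)
  case 0 then show ?case by (simp add: run_starts_def linked_def)
next
  case (Suc d)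
  show ?case
  proof (cases "linked (Suc d) i")
    case False then show ?thesis using Suc.prems by (simp add: run_starts_def)
  next
    case True
    have dS: "d \<in> long_diags i" using True Suc.prems by (simp add: linked_def long_diags_def)
    have "(cell (Suc d) i, cell d i) \<in> Pk_adjacency i"
      using linked_cells_adjacent cell_in_Pk[OF dS] cell_in_Pk[OF Suc.prems]
      by (simp add: Pk_adjacency_def)
    then show ?thesis using Suc.IH[OF dS] True by (auto intro: converse_rtrancl_into_rtrancl)
  qed
qed

lemma run_start_idem: "s \<in> run_starts i \<Longrightarrow> run_start i s = s"
  by (cases s) (auto simp: run_starts_def)

lemma run_start_adjacent:
  assumes "d \<in> long_diags i" "d' \<in> long_diags i" "adjacent (cell d i) (cell d' i)"
  shows "run_start i d = run_start i d'"
proof -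
  have "linked (Suc e) i" if "e \<in> long_diags i" for e
    using that by (simp add: linked_def long_diags_def)
  then show ?thesis using adjacent_cells[OF assms(3)] assms(1,2) by auto
qed

lemma run_start_rtrancl:
  assumes i: "0 < i"
  shows "(x,y) \<in> (Pk_adjacency i)\<^sup>* \<Longrightarrow> x \<in> Pk shape i \<Longrightarrow>
         y \<in> Pk shape i \<and> run_start i (diag x) = run_start i (diag y)"
proof (induction rule: rtrancl_induct)
  case base then show ?case by simp
next
  case (step y z)
  then have yz: "y \<in> Pk shape i" "z \<in> Pk shape i" "adjacent y z" by (auto simp: Pk_adjacency_def)
  have y: "y = cell (diag y) i" "diag y \<in> long_diags i" using Pk_cell[OF i yz(1)] by auto
  have z: "z = cell (diag z) i" "diag z \<in> long_diags i" using Pk_cell[OF i yz(2)] by auto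
  have "run_start i (diag y) = run_start i (diag z)"
    using run_start_adjacent[OF y(2) z(2)] yz(3) y(1) z(1) by simp
  then show ?case using step.IH step.prems yz(2) by simp
qed

lemma comp_Pk_eq_card_run_starts:
  assumes i: "0 < i"
  shows "comp (Pk shape i) = card (run_starts i)"
proof -
  let ?R = "(Pk_adjacency i)\<^sup>*"
  have "sym (Pk_adjacency i)" by (auto simp: Pk_adjacency_def sym_def adjacent_def)
  then have eq: "equiv UNIV ?R" by (simp add: equiv_def refl_rtrancl sym_rtrancl trans_rtrancl)
  have c: "comp (Pk shape i) = card (Pk shape i // ?R)" by (simp add: comp_def Pk_adjacency_def)
  have img: "Pk shape i // ?R = (\<lambda>s. ?R `` {cell s i}) ` run_starts i"
  proof
    show "Pk shape i // ?R \<subseteq> (\<lambda>s. ?R `` {cell s i}) ` run_starts i"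
    proof
      fix X assume "X \<in> Pk shape i // ?R"
      then obtain x where x: "x \<in> Pk shape i" "X = ?R `` {x}" by (auto simp: quotient_def)
      then have xd: "x = cell (diag x) i" "diag x \<in> long_diags i" using Pk_cell[OF i] by auto
      have sp: "run_start i (diag x) \<in> run_starts i" "(x, cell (run_start i (diag x)) i) \<in> ?R"
        using run_start_props[OF xd(2)] xd(1) by auto
      have "X = ?R `` {cell (run_start i (diag x)) i}"
        using x(2) equiv_class_eq[OF eq sp(2)] by simp
      then show "X \<in> (\<lambda>s. ?R `` {cell s i}) ` run_starts i" using sp(1) by auto
    qed
    show "(\<lambda>s. ?R `` {cell s i}) ` run_starts i \<subseteq> Pk shape i // ?R"
      using cell_in_Pk by (auto simp: quotient_def run_starts_def)
  qed
  have inj: "inj_on (\<lambda>s. ?R `` {cell s i}) (run_starts i)"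
  proof (rule inj_onI)
    fix s s' assume s: "s \<in> run_starts i" "s' \<in> run_starts i"
      and e: "?R `` {cell s i} = ?R `` {cell s' i}"
    have "(cell s i, cell s' i) \<in> ?R" using e eq_equiv_class_iff[OF eq UNIV_I UNIV_I] by simp
    moreover have "cell s i \<in> Pk shape i" using cell_in_Pk s by (simp add: run_starts_def)
    ultimately have "run_start i s = run_start i s'" using run_start_rtrancl[OF i] by fastforce
    then show "s = s'" using run_start_idem s by simp
  qed
  show ?thesis using c img card_image[OF inj] by simp
qed

lemma Min_run_start: "long_diags i \<noteq> {} \<Longrightarrow> Min (long_diags i) \<in> run_starts i"
proof -
  assume ne: "long_diags i \<noteq> {}"
  have m: "Min (long_diags i) \<in> long_diags i" using Min_in[OF finite_long_diags ne] .
  have "\<not> linked (Min (long_diags i)) i"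
  proof
    assume "linked (Min (long_diags i)) i"
    then have "Min (long_diags i) - 1 \<in> long_diags i" "0 < Min (long_diags i)"
      using m by (auto simp: linked_def long_diags_def)
    then show False using Min_le[OF finite_long_diags] by fastforce
  qed
  then show ?thesis using m by (simp add: run_starts_def)
qed

subsection \<open>Counting the amenable tableaux\<close>

definition amenable_fillings :: "((nat \<times> nat) \<Rightarrow> letter) set" where
  "amenable_fillings =
     {T. tableau shape T \<and> amenable shape T \<and> content shape T = content shape (Ttab shape) \<and>
         (\<forall>c. c \<notin> shape \<longrightarrow> T c = (0, False))}"

lemma amenable_fillings_iff:
  "T \<in> amenable_fillings \<longleftrightarrow>
   level_entries T \<and> marks_forced T \<and> leftmost_unmarked T \<and> (\<forall>c. c \<notin> shape \<longrightarrow> T c = (0, False))"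
proof
  assume "T \<in> amenable_fillings"
  then have T: "tableau shape T" "amenable shape T" "content shape T = content shape (Ttab shape)"
    and "\<forall>c. c \<notin> shape \<longrightarrow> T c = (0, False)"
    by (auto simp: amenable_fillings_def)
  moreover have g: "level_entries T" using content_Ttab_level_entries[OF T(1,3)] .
  moreover have fm: "marks_forced T" using tableau_iff_marks_forced[OF g] T(1) by simp
  ultimately show "level_entries T \<and> marks_forced T \<and> leftmost_unmarked T \<and>
                   (\<forall>c. c \<notin> shape \<longrightarrow> T c = (0, False))"
    using amenable_iff_leftmost_unmarked[OF g fm] by simp
next
  assume h: "level_entries T \<and> marks_forced T \<and> leftmost_unmarked T \<and>
             (\<forall>c. c \<notin> shape \<longrightarrow> T c = (0, False))"
  then have "tableau shape T" "amenable shape T"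
    using tableau_iff_marks_forced amenable_iff_leftmost_unmarked by auto
  moreover have "content shape T = content shape (Ttab shape)"
    using h Ttab_shape by (intro content_cong) (simp add: level_entries_def)
  ultimately show "T \<in> amenable_fillings" using h by (simp add: amenable_fillings_def)
qed

text \<open>The cells whose mark can be chosen freely: the first cells of all runs but the leftmost.\<close>

definition free_cells :: "(nat \<times> nat) set" where
  "free_cells = {(d,i). d \<in> long_diags i \<and> \<not> linked d i \<and> (\<exists>d'<d. d' \<in> long_diags i)}"

definition filling :: "(nat \<times> nat) set \<Rightarrow> (nat \<times> nat) \<Rightarrow> letter" where
  "filling G c =
     (if c \<in> shape then
        (level c, if (diag c, level c) \<in> free_cells then (diag c, level c) \<in> G
                  else forced_mark (diag c) (level c))
      else (0, False))"

lemma finite_free_cells: "finite free_cells"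
proof -
  have "free_cells \<subseteq> {..<W} \<times> {..a 0}"
  proof
    fix x assume "x \<in> free_cells"
    then obtain d i where x: "x = (d,i)" "d \<in> long_diags i" by (auto simp: free_cells_def)
    then have "i \<le> a d" "a d \<le> a 0"
      using a_antimono[of 0 d] by (auto simp: long_diags_def diag_len_def)
    then show "x \<in> {..<W} \<times> {..a 0}" using x long_diags_less by auto
  qed
  then show ?thesis using finite_subset by blast
qed

lemma filling_cell:
  "d \<in> long_diags i \<Longrightarrow>
   filling G (cell d i) = (i, if (d,i) \<in> free_cells then (d,i) \<in> G else forced_mark d i)"
  using cell_in_shape by (simp add: filling_def)

lemma filling_amenable: "filling G \<in> amenable_fillings"
proof -
  have "level_entries (filling G)" by (simp add: level_entries_def filling_def)
  moreover have "marks_forced (filling G)"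
    unfolding marks_forced_def using filling_cell by (auto simp: free_cells_def)
  moreover have "leftmost_unmarked (filling G)" unfolding leftmost_unmarked_def
  proof (intro allI impI)
    fix i d assume d: "d \<in> long_diags i" and first: "\<forall>d'<d. d' \<notin> long_diags i"
    then have "(d,i) \<notin> free_cells" by (auto simp: free_cells_def)
    moreover have "\<not> forced_mark d i"
    proof
      assume "forced_mark d i"
      then have "0 < d" "i \<le> diag_len (d-1)" by (auto simp: forced_mark_def linked_def)
      then show False using first d by (auto simp: long_diags_def)
    qed
    ultimately show "\<not> marked (filling G) d i" using filling_cell[OF d] by (simp add: marked_def)
  qed
  ultimately show ?thesis unfolding amenable_fillings_iff by (simp add: filling_def)
qed

lemma amenable_filling_eq:
  assumes "T \<in> amenable_fillings"
  shows "T = filling {x\<in>free_cells. marked T (fst x) (snd x)}"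
proof
  fix c
  have h: "level_entries T" "marks_forced T" "leftmost_unmarked T"
    "\<forall>c. c \<notin> shape \<longrightarrow> T c = (0, False)"
    using assms amenable_fillings_iff by auto
  show "T c = filling {x\<in>free_cells. marked T (fst x) (snd x)} c"
  proof (cases "c \<in> shape")
    case False
    then have "T c = (0, False)" using h(4) by blast
    then show ?thesis using False by (simp add: filling_def)
  next
    case True
    obtain d i where c: "c = cell d i" "d \<in> long_diags i" using shape_cell[OF True] by blast
    have "fst (T c) = i" using h(1) True c by (simp add: level_entries_def)
    moreover have "snd (T c) = (if (d,i) \<in> free_cells then marked T d i else forced_mark d i)"
    proof (cases "(d,i) \<in> free_cells \<or> linked d i")
      case True then show ?thesis using h(2) c unfolding marks_forced_def by (auto simp: marked_def)
    next
      case False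
      then have "\<forall>d'<d. d' \<notin> long_diags i" using c(2) by (auto simp: free_cells_def)
      then have "\<not> marked T d i" using h(3) c(2) unfolding leftmost_unmarked_def by blast
      then show ?thesis using False c by (simp add: marked_def forced_mark_def)
    qed
    ultimately show ?thesis using filling_cell[OF c(2)] unfolding c(1) by (simp add: prod_eq_iff)
  qed
qed

lemma inj_on_filling: "inj_on filling (Pow free_cells)"
proof (rule inj_onI)
  fix G1 G2 assume G: "G1 \<in> Pow free_cells" "G2 \<in> Pow free_cells" and e: "filling G1 = filling G2"
  show "G1 = G2"
  proof (rule set_eqI)
    fix x
    show "x \<in> G1 \<longleftrightarrow> x \<in> G2"
    proof (cases "x \<in> free_cells")
      case True
      then obtain d i where x: "x = (d,i)" "d \<in> long_diags i" by (auto simp: free_cells_def)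
      have "filling G1 (cell d i) = filling G2 (cell d i)" using e by simp
      then show ?thesis using filling_cell[OF x(2)] True x(1) by simp
    next
      case False then show ?thesis using G by auto
    qed
  qed
qed

lemma card_amenable_fillings_free: "card amenable_fillings = 2 ^ card free_cells"
proof -
  have "amenable_fillings = filling ` Pow free_cells"
    using amenable_filling_eq filling_amenable by blast
  then show ?thesis using card_image[OF inj_on_filling] card_Pow finite_free_cells by simp
qed

definition n_levels :: nat where
  "n_levels = length (content shape (Ttab shape))"

lemma n_levels_eq: "n_levels = (if shape = {} then 0 else Max (level ` shape))"
proof -
  have "(\<lambda>c. fst (Ttab shape c)) ` shape = level ` shape" using Ttab_shape by (auto simp: image_iff)
  then show ?thesis by (simp add: n_levels_def content_def Let_def)
qed

lemma level_le_n_levels: "c \<in> shape \<Longrightarrow> level c \<le> n_levels"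
  using n_levels_eq by (auto intro: Max_ge)

lemma long_diags_nonempty: "1 \<le> i \<Longrightarrow> i \<le> n_levels \<Longrightarrow> long_diags i \<noteq> {}"
proof -
  assume i: "1 \<le> i" "i \<le> n_levels"
  then have "shape \<noteq> {}" using n_levels_eq by (auto split: if_splits)
  then have "n_levels \<in> level ` shape" using n_levels_eq Max_in[of "level ` shape"] by simp
  then obtain c where c: "c \<in> shape" "level c = n_levels" by auto
  then have "diag c \<in> long_diags n_levels" using shape_cell[OF c(1)] by simp
  then show ?thesis using long_diags_antimono[of i n_levels] i by auto
qed

lemma free_cells_eq:
  "free_cells = (\<Union>i\<in>{1..n_levels}. (\<lambda>d. (d,i)) ` (run_starts i - {Min (long_diags i)}))"
proof (rule set_eqI; rule iffI)
  fix x assume "x \<in> free_cells"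
  then obtain d i d' where di: "x = (d,i)" "d \<in> long_diags i" "\<not> linked d i"
    "d' < d" "d' \<in> long_diags i"
    by (auto simp: free_cells_def)
  have "i \<le> n_levels" using level_le_n_levels[OF cell_in_shape[OF di(2)]] by simp
  moreover have "d \<noteq> Min (long_diags i)" using Min_le[OF finite_long_diags di(5)] di(4) by linarith
  ultimately show "x \<in> (\<Union>i\<in>{1..n_levels}. (\<lambda>d. (d,i)) ` (run_starts i - {Min (long_diags i)}))"
    using di by (auto simp: run_starts_def long_diags_def)
next
  fix x assume "x \<in> (\<Union>i\<in>{1..n_levels}. (\<lambda>d. (d,i)) ` (run_starts i - {Min (long_diags i)}))"
  then obtain i d where x: "x = (d,i)" "d \<in> run_starts i" "d \<noteq> Min (long_diags i)" by auto
  have dS: "d \<in> long_diags i" "\<not> linked d i" using x by (auto simp: run_starts_def)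
  have "Min (long_diags i) < d" using Min_le[OF finite_long_diags dS(1)] x(3) by linarith
  moreover have "Min (long_diags i) \<in> long_diags i"
    using Min_in[OF finite_long_diags] dS(1) by blast
  ultimately show "x \<in> free_cells" using x dS by (auto simp: free_cells_def)
qed

lemma card_free_cells: "card free_cells = (\<Sum>i\<in>{1..n_levels}. card (run_starts i) - 1)"
proof -
  have "card free_cells =
        (\<Sum>i\<in>{1..n_levels}. card ((\<lambda>d. (d,i)) ` (run_starts i - {Min (long_diags i)})))"
    unfolding free_cells_eq by (rule card_UN_disjoint) (auto simp: run_starts_def)
  also have "\<dots> = (\<Sum>i\<in>{1..n_levels}. card (run_starts i) - 1)"
  proof (rule sum.cong)
    fix i assume i: "i \<in> {1..n_levels}"
    have "card ((\<lambda>d. (d,i)) ` (run_starts i - {Min (long_diags i)})) =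
          card (run_starts i - {Min (long_diags i)})"
      by (rule card_image) (auto simp: inj_on_def)
    also have "\<dots> = card (run_starts i) - 1"
      using Min_run_start[OF long_diags_nonempty] i by (simp add: run_starts_def)
    finally show "card ((\<lambda>d. (d,i)) ` (run_starts i - {Min (long_diags i)})) =
                  card (run_starts i) - 1" .
  qed simp
  finally show ?thesis .
qed

lemma card_amenable_fillings:
  "card amenable_fillings = (\<Prod>i = 1..n_levels. 2 ^ (comp (Pk shape i) - 1))"
proof -
  have "card amenable_fillings = 2 ^ (\<Sum>i\<in>{1..n_levels}. card (run_starts i) - 1)"
    using card_amenable_fillings_free card_free_cells by simp
  also have "\<dots> = (\<Prod>i = 1..n_levels. 2 ^ (card (run_starts i) - 1))" by (simp add: power_sum)
  also have "\<dots> = (\<Prod>i = 1..n_levels. 2 ^ (comp (Pk shape i) - 1))"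
    by (rule prod.cong) (auto simp: comp_Pk_eq_card_run_starts)
  finally show ?thesis .
qed

end

lemma skew_diagram_by_diagonals:
  assumes "DP lam" "DP mu"
  shows "skew_diagram lam mu =
         {(x,y). x \<le> y \<and> parts_above (y-x) mu < x \<and> x \<le> parts_above (y-x) lam}"
  unfolding skew_diagram_def shifted_diagram_by_diagonals[OF assms(1)]
    shifted_diagram_by_diagonals[OF assms(2)] by auto

lemma skew_shape_of_DP:
  assumes lam: "DP lam" and mu: "DP mu" and sub: "shifted_diagram mu \<subseteq> shifted_diagram lam"
  shows "skew_shape (\<lambda>d. parts_above d lam) (\<lambda>d. parts_above d mu) (sum_list lam)"
proof
  have sl: "sorted_wrt (>) lam" and sm: "sorted_wrt (>) mu" using lam mu by (auto simp: DP_def)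
  show "\<And>d. parts_above (Suc d) lam \<le> parts_above d lam"
    and "\<And>d. parts_above (Suc d) mu \<le> parts_above d mu" by (rule parts_above_Suc_le)+
  show "\<And>d. parts_above d lam \<le> Suc (parts_above (Suc d) lam)" by (rule parts_above_le_Suc[OF sl])
  show "\<And>d. parts_above d mu \<le> Suc (parts_above (Suc d) mu)" by (rule parts_above_le_Suc[OF sm])
  show "\<And>d. sum_list lam \<le> d \<Longrightarrow> parts_above d lam = 0" by (rule parts_above_eq_0)
  fix d
  let ?m = "parts_above d mu"
  show "?m \<le> parts_above d lam"
  proof (rule ccontr)
    assume "\<not> ?m \<le> parts_above d lam"
    then have "(?m, ?m + d) \<in> shifted_diagram mu" by (simp add: shifted_diagram_by_diagonals[OF mu])
    then show False
      using sub \<open>\<not> ?m \<le> parts_above d lam\<close> by (auto simp: shifted_diagram_by_diagonals[OF lam])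
  qed
qed

theorem proposition3p5:
  fixes lam mu :: "nat list"
  assumes "DP lam" and "DP mu"
    and "shifted_diagram mu \<subseteq> shifted_diagram lam"
  shows "fcoef lam mu (content (skew_diagram lam mu) (Ttab (skew_diagram lam mu))) =
         (\<Prod>i = 1..length (content (skew_diagram lam mu) (Ttab (skew_diagram lam mu))).
            2 ^ (comp (Pk (skew_diagram lam mu) i) - 1))"
proof -
  interpret skew_shape "\<lambda>d. parts_above d lam" "\<lambda>d. parts_above d mu" "sum_list lam"
    using skew_shape_of_DP[OF assms] .
  have skew: "skew_diagram lam mu = shape"
    using skew_diagram_by_diagonals[OF assms(1,2)] by (simp add: shape_def)
  show ?thesis
    using card_amenable_fillings
    unfolding skew fcoef_def amenable_fillings_def n_levels_def by simp
qed

end
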